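(* Let $(H_m)$ be a $p$-family of complete graphs, let $(G_m)$ be a $p$-family of graphs, and let $f_m=\hat f_{G_m,H_m}(\bar Z,\bar Y)$ be the generalised homomorphism polynomial (over all homomorphisms from $G_m$ to $H_m$). (i) If $(G_m)$ has bounded tree-width, then $(f_m)\in\mathsf{VP}$. (ii) If $(G_m)$ has bounded path-width, then $(f_m)\in\mathsf{VBP}$.
   Context: For undirected graphs $G,H$, a homomorphism $G\to H$ is a map $V(G)\to V(H)$ sending edges to edges. With variables $Z_{u,a}$ ($u\in V(G)$, $a\in V(H)$) and $Y_{(a,b)}$ ($(a,b)\in E(H)$), the generalised homomorphism polynomial is $\hat f_{G,H}=\sum_{\phi}\big(\prod_{u\in V(G)}Z_{u,\phi(u)}\big)\big(\prod_{(u,v)\in E(G)}Y_{(\phi(u),\phi(v))}\big)$, the sum over all homomorphisms $\phi:G\to H$. A sequence of graphs is a $p$-family if the number of vertices of $G_m$ is polynomially bounded in $m$; it has bounded tree-width (path-width) if some constant bounds the tree-width (path-width) of every graph in it. A $p$-family of polynomials has polynomially bounded number of variables and degree. $\mathsf{VP}$: $p$-families computed by polynomial-size arithmetic circuits; $\mathsf{VBP}$: $p$-families computed by polynomial-size skew arithmetic circuits (at every $\times$ gate at most one input is the output of another gate). *)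

theory Defs
  imports Main "HOL-Library.Poly_Mapping"
begin

definition wf_graph :: "nat \<Rightarrow> nat set set \<Rightarrow> bool" where
  "wf_graph n E \<longleftrightarrow> (\<forall>e\<in>E. \<exists>u v. u \<noteq> v \<and> u < n \<and> v < n \<and> e = {u, v})"

definition complete_edges :: "nat \<Rightarrow> nat set set" where
  "complete_edges n = {{a, b} | a b. a \<noteq> b \<and> a < n \<and> b < n}"

definition homs :: "nat \<Rightarrow> nat set set \<Rightarrow> nat \<Rightarrow> nat set set \<Rightarrow> (nat \<Rightarrow> nat) set" where
  "homs nG EG nH EH = {\<phi>. (\<forall>u<nG. \<phi> u < nH) \<and> (\<forall>u. nG \<le> u \<longrightarrow> \<phi> u = 0)
                          \<and> (\<forall>e\<in>EG. \<phi> ` e \<in> EH)}"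

definition adj :: "nat set set \<Rightarrow> nat \<Rightarrow> nat \<Rightarrow> bool" where
  "adj E x y \<longleftrightarrow> {x, y} \<in> E \<and> x \<noteq> y"

definition connected_in :: "nat set set \<Rightarrow> nat set \<Rightarrow> bool" where
  "connected_in E S \<longleftrightarrow>
     (\<forall>x\<in>S. \<forall>y\<in>S. (x, y) \<in> {(a, b). a \<in> S \<and> b \<in> S \<and> adj E a b}\<^sup>*)"

definition has_cycle :: "nat set set \<Rightarrow> bool" where
  "has_cycle E \<longleftrightarrow> (\<exists>cs. length cs \<ge> 3 \<and> distinct cs
       \<and> (\<forall>i. Suc i < length cs \<longrightarrow> adj E (cs ! i) (cs ! Suc i))
       \<and> adj E (last cs) (hd cs))"

definition is_tree :: "nat \<Rightarrow> nat set set \<Rightarrow> bool" where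
  "is_tree k TE \<longleftrightarrow> 0 < k \<and> wf_graph k TE \<and> connected_in TE {0..<k} \<and> \<not> has_cycle TE"

definition tree_decomposition ::
  "nat \<Rightarrow> nat set set \<Rightarrow> nat \<Rightarrow> nat set set \<Rightarrow> (nat \<Rightarrow> nat set) \<Rightarrow> bool" where
  "tree_decomposition n E k TE B \<longleftrightarrow>
     is_tree k TE
     \<and> (\<forall>t<k. B t \<subseteq> {0..<n})
     \<and> (\<forall>v<n. \<exists>t<k. v \<in> B t)
     \<and> (\<forall>e\<in>E. \<exists>t<k. e \<subseteq> B t)
     \<and> (\<forall>v<n. connected_in TE {t. t < k \<and> v \<in> B t})"

definition treewidth_le :: "nat \<Rightarrow> nat set set \<Rightarrow> nat \<Rightarrow> bool" where
  "treewidth_le n E w \<longleftrightarrow>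
     (\<exists>k TE B. tree_decomposition n E k TE B \<and> (\<forall>t<k. card (B t) \<le> w + 1))"

definition path_decomposition :: "nat \<Rightarrow> nat set set \<Rightarrow> nat \<Rightarrow> (nat \<Rightarrow> nat set) \<Rightarrow> bool" where
  "path_decomposition n E k B \<longleftrightarrow>
     0 < k
     \<and> (\<forall>t<k. B t \<subseteq> {0..<n})
     \<and> (\<forall>v<n. \<exists>t<k. v \<in> B t)
     \<and> (\<forall>e\<in>E. \<exists>t<k. e \<subseteq> B t)
     \<and> (\<forall>v i j l. i \<le> l \<and> l \<le> j \<and> j < k \<and> v \<in> B i \<and> v \<in> B j \<longrightarrow> v \<in> B l)"

definition pathwidth_le :: "nat \<Rightarrow> nat set set \<Rightarrow> nat \<Rightarrow> bool" where
  "pathwidth_le n E w \<longleftrightarrow>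
     (\<exists>k B. path_decomposition n E k B \<and> (\<forall>t<k. card (B t) \<le> w + 1))"

type_synonym ('v, 'a) mpoly = "('v \<Rightarrow>\<^sub>0 nat) \<Rightarrow>\<^sub>0 'a"

definition mvar :: "'v \<Rightarrow> ('v, 'a::{zero,one}) mpoly" where
  "mvar x = Poly_Mapping.single (Poly_Mapping.single x 1) 1"

definition mconst :: "'a::zero \<Rightarrow> ('v, 'a) mpoly" where
  "mconst c = Poly_Mapping.single 0 c"

definition mpoly_vars :: "('v, 'a::zero) mpoly \<Rightarrow> 'v set" where
  "mpoly_vars p = \<Union> (Poly_Mapping.keys ` Poly_Mapping.keys p)"

definition mono_deg :: "('v \<Rightarrow>\<^sub>0 nat) \<Rightarrow> nat" where
  "mono_deg \<mu> = sum (Poly_Mapping.lookup \<mu>) (Poly_Mapping.keys \<mu>)"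

definition mpoly_deg :: "('v, 'a::zero) mpoly \<Rightarrow> nat" where
  "mpoly_deg p = Max (insert 0 (mono_deg ` Poly_Mapping.keys p))"

text \<open>Variables Z_{u,a} and Y_e, where an edge e of the undirected graph H is an unordered pair.\<close>
datatype hvar = Zv nat nat | Yv "nat set"

definition hom_poly :: "nat \<Rightarrow> nat set set \<Rightarrow> nat \<Rightarrow> nat set set \<Rightarrow> (hvar, 'a::comm_ring_1) mpoly" where
  "hom_poly nG EG nH EH =
     (\<Sum>\<phi>\<in>homs nG EG nH EH.
        (\<Prod>u\<in>{0..<nG}. mvar (Zv u (\<phi> u))) * (\<Prod>e\<in>EG. mvar (Yv (\<phi> ` e))))"

text \<open>A circuit is a list of gates; gate i may only refer to gates j < i; the output is the last gate.\<close>
datatype ('v, 'a) gate = Input 'v | Cst 'a | Plus nat nat | Times nat nat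

fun gate_ok :: "nat \<Rightarrow> ('v, 'a) gate \<Rightarrow> bool" where
  "gate_ok i (Plus j l) = (j < i \<and> l < i)"
| "gate_ok i (Times j l) = (j < i \<and> l < i)"
| "gate_ok i _ = True"

definition wf_circuit :: "('v, 'a) gate list \<Rightarrow> bool" where
  "wf_circuit gs \<longleftrightarrow> gs \<noteq> [] \<and> (\<forall>i<length gs. gate_ok i (gs ! i))"

fun is_leaf :: "('v, 'a) gate \<Rightarrow> bool" where
  "is_leaf (Input _) = True"
| "is_leaf (Cst _) = True"
| "is_leaf _ = False"

definition skew_circuit :: "('v, 'a) gate list \<Rightarrow> bool" where
  "skew_circuit gs \<longleftrightarrow>
     (\<forall>i<length gs. \<forall>j l. gs ! i = Times j l \<longrightarrow> is_leaf (gs ! j) \<or> is_leaf (gs ! l))"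

fun gate_val :: "('v, 'a::comm_ring_1) mpoly list \<Rightarrow> ('v, 'a) gate \<Rightarrow> ('v, 'a) mpoly" where
  "gate_val vs (Input x) = mvar x"
| "gate_val vs (Cst c) = mconst c"
| "gate_val vs (Plus j l) = vs ! j + vs ! l"
| "gate_val vs (Times j l) = vs ! j * vs ! l"

definition circuit_vals :: "('v, 'a::comm_ring_1) gate list \<Rightarrow> ('v, 'a) mpoly list" where
  "circuit_vals gs = foldl (\<lambda>vs g. vs @ [gate_val vs g]) [] gs"

definition computes :: "('v, 'a::comm_ring_1) gate list \<Rightarrow> ('v, 'a) mpoly \<Rightarrow> bool" where
  "computes gs p \<longleftrightarrow> wf_circuit gs \<and> last (circuit_vals gs) = p"

definition poly_bounded :: "(nat \<Rightarrow> nat) \<Rightarrow> bool" where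
  "poly_bounded s \<longleftrightarrow> (\<exists>c. \<forall>m. s m \<le> c * (Suc m) ^ c)"

definition p_family :: "(nat \<Rightarrow> ('v, 'a::zero) mpoly) \<Rightarrow> bool" where
  "p_family f \<longleftrightarrow> (\<forall>m. finite (mpoly_vars (f m)))
      \<and> poly_bounded (\<lambda>m. card (mpoly_vars (f m))) \<and> poly_bounded (\<lambda>m. mpoly_deg (f m))"

definition in_VP :: "(nat \<Rightarrow> ('v, 'a::comm_ring_1) mpoly) \<Rightarrow> bool" where
  "in_VP f \<longleftrightarrow> p_family f \<and>
     (\<exists>s. poly_bounded s \<and> (\<forall>m. \<exists>gs. computes gs (f m) \<and> length gs \<le> s m))"

definition in_VBP :: "(nat \<Rightarrow> ('v, 'a::comm_ring_1) mpoly) \<Rightarrow> bool" where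
  "in_VBP f \<longleftrightarrow> p_family f \<and>
     (\<exists>s. poly_bounded s \<and> (\<forall>m. \<exists>gs. computes gs (f m) \<and> skew_circuit gs \<and> length gs \<le> s m))"

end

theory Submission
  imports Defs "HOL-Library.Sublist"
begin

text \<open>A map \<phi> from the vertices of G to those of K_N is a homomorphism iff no edge is collapsed,
  so the homomorphism polynomial is a sum over all \<phi> : {0..<n} \<rightarrow> {0..<N} of a product of local
  factors: Z_{u,\<phi> u} for each vertex u and, for each edge {u,v}, Y_{\<phi> u,\<phi> v} or 0 if \<phi> u = \<phi> v.
  Such a sum of products is computed by variable elimination: summing out one vertex v replaces
  the factors whose scope contains v by a single new factor on the union of these scopes minus v,
  which a circuit tabulates with one gate per assignment of the new scope. A tree decomposition of
  width w yields an elimination order (always a vertex occurring only in a leaf bag) in which every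
  new scope lies in a bag, so each table has at most (N+1)^(w+1) entries and the circuit has
  polynomial size. Along a path decomposition, eliminating the vertices in the order of the last
  bag containing them keeps all scopes that contain the eliminated vertex inside a single bag and
  needs only one non-leaf factor at any time; multiplying it by variables and constants only, the
  circuit is skew.\<close>

section \<open>Building circuits gate by gate\<close>

lemma circuit_vals_snoc:
  "circuit_vals (gs @ [g]) = circuit_vals gs @ [gate_val (circuit_vals gs) g]"
  by (simp add: circuit_vals_def)

lemma length_circuit_vals [simp]: "length (circuit_vals gs) = length gs"
  by (induction gs rule: rev_induct) (simp_all add: circuit_vals_def)

lemma prefix_circuit_vals: "prefix gs gs' \<Longrightarrow> prefix (circuit_vals gs) (circuit_vals gs')"
proof (induction gs' rule: rev_induct)
  case (snoc g gs')
  then show ?case by (auto simp: circuit_vals_snoc intro: prefix_order.trans)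
qed simp

definition circuit_ok :: "bool \<Rightarrow> ('v, 'a) gate list \<Rightarrow> bool" where
  "circuit_ok skew gs \<longleftrightarrow> (\<forall>i<length gs. gate_ok i (gs ! i)) \<and> (skew \<longrightarrow> skew_circuit gs)"

definition provides :: "('v, 'a::comm_ring_1) gate list \<Rightarrow> ('v, 'a) mpoly \<Rightarrow> bool" where
  "provides gs p \<longleftrightarrow> p \<in> set (circuit_vals gs)"

lemma provides_prefix: "provides gs p \<Longrightarrow> prefix gs gs' \<Longrightarrow> provides gs' p"
  unfolding provides_def using prefix_circuit_vals set_mono_prefix by blast

lemma circuit_ok_Nil [simp]: "circuit_ok skew []"
  by (simp add: circuit_ok_def skew_circuit_def)

lemma circuit_ok_snoc:
  assumes "circuit_ok skew gs" "gate_ok (length gs) g"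
    and "\<And>j l. skew \<Longrightarrow> g = Times j l \<Longrightarrow> is_leaf (gs ! j) \<or> is_leaf (gs ! l)"
  shows "circuit_ok skew (gs @ [g])"
  using assms unfolding circuit_ok_def skew_circuit_def
  by (auto simp: nth_append less_Suc_eq split: if_splits; metis gate_ok.simps(2))

lemma circuit_ok_snoc_leaf: "circuit_ok skew gs \<Longrightarrow> is_leaf g \<Longrightarrow> circuit_ok skew (gs @ [g])"
  by (cases g) (auto intro!: circuit_ok_snoc)

definition buildable ::
  "bool \<Rightarrow> ('v, 'a::comm_ring_1) gate list \<Rightarrow> nat \<Rightarrow> (('v, 'a) gate list \<Rightarrow> bool) \<Rightarrow> bool" where
  "buildable skew gs C Q \<longleftrightarrow>
     (\<exists>gs'. prefix gs gs' \<and> circuit_ok skew gs' \<and> length gs' \<le> length gs + C \<and> Q gs')"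

lemma buildable_refl: "circuit_ok skew gs \<Longrightarrow> Q gs \<Longrightarrow> buildable skew gs 0 Q"
  by (auto simp: buildable_def)

lemma buildable_mono:
  "buildable skew gs C Q \<Longrightarrow> C \<le> C' \<Longrightarrow> (\<And>gs'. prefix gs gs' \<Longrightarrow> Q gs' \<Longrightarrow> Q' gs')
    \<Longrightarrow> buildable skew gs C' Q'"
  unfolding buildable_def by force

lemma buildable_weaken:
  "buildable skew gs C Q \<Longrightarrow> (\<And>gs'. prefix gs gs' \<Longrightarrow> Q gs' \<Longrightarrow> Q' gs') \<Longrightarrow> buildable skew gs C Q'"
  unfolding buildable_def by blast

lemma buildable_seq:
  assumes "buildable skew gs C1 Q1"
    and "\<And>gs1. prefix gs gs1 \<Longrightarrow> circuit_ok skew gs1 \<Longrightarrow> Q1 gs1 \<Longrightarrow> buildable skew gs1 C2 Q2"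
  shows "buildable skew gs (C1 + C2) Q2"
proof -
  obtain gs1 where 1: "prefix gs gs1" "circuit_ok skew gs1" "length gs1 \<le> length gs + C1" "Q1 gs1"
    using assms(1) by (auto simp: buildable_def)
  obtain gs2 where "prefix gs1 gs2" "circuit_ok skew gs2" "length gs2 \<le> length gs1 + C2" "Q2 gs2"
    using assms(2)[OF 1(1,2,4)] by (auto simp: buildable_def)
  with 1 show ?thesis unfolding buildable_def by (auto intro: prefix_order.trans)
qed

lemma buildable_gate:
  assumes "circuit_ok skew gs" "gate_ok (length gs) g"
    and "\<And>j l. skew \<Longrightarrow> g = Times j l \<Longrightarrow> is_leaf (gs ! j) \<or> is_leaf (gs ! l)"
  shows "buildable skew gs 1 (\<lambda>gs'. provides gs' (gate_val (circuit_vals gs) g))"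
  unfolding buildable_def
  by (intro exI[of _ "gs @ [g]"]) (simp add: circuit_ok_snoc[OF assms] circuit_vals_snoc provides_def)

definition leaf_poly :: "('v, 'a::comm_ring_1) mpoly \<Rightarrow> bool" where
  "leaf_poly p \<longleftrightarrow> (\<exists>x. p = mvar x) \<or> (\<exists>c. p = mconst c)"

lemma mconst_0 [simp]: "mconst 0 = 0" and mconst_1 [simp]: "mconst 1 = 1"
  by (simp_all add: mconst_def)

lemma leaf_poly_0 [simp]: "leaf_poly 0" and leaf_poly_1 [simp]: "leaf_poly 1"
  unfolding leaf_poly_def by (metis mconst_0, metis mconst_1)

lemma leaf_poly_gate:
  assumes "leaf_poly p"
  obtains g where "is_leaf g" "\<And>vs. gate_val vs g = p"
proof -
  consider x where "p = mvar x" | c where "p = mconst c" using assms unfolding leaf_poly_def by blast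
  then show ?thesis
  proof cases
    case 1 then show ?thesis using that[of "Input x"] by simp
  next
    case 2 then show ?thesis using that[of "Cst c"] by simp
  qed
qed

lemma buildable_leaf:
  assumes "circuit_ok skew gs" "leaf_poly p"
  shows "buildable skew gs 1 (\<lambda>gs'. provides gs' p)"
proof -
  obtain g where "is_leaf g" "\<And>vs. gate_val vs g = p" using leaf_poly_gate[OF assms(2)] by blast
  then show ?thesis using buildable_gate[OF assms(1), of g] by (cases g) auto
qed

lemma provides_nth:
  assumes "provides gs p" obtains i where "i < length gs" "circuit_vals gs ! i = p"
  using assms unfolding provides_def by (metis in_set_conv_nth length_circuit_vals)

lemma buildable_plus:
  assumes "circuit_ok skew gs" "provides gs p" "provides gs q"
  shows "buildable skew gs 1 (\<lambda>gs'. provides gs' (p + q))"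
proof -
  obtain i j where "i < length gs" "j < length gs" "circuit_vals gs ! i = p" "circuit_vals gs ! j = q"
    using assms(2,3) by (metis provides_nth)
  then show ?thesis using buildable_gate[OF assms(1), of "Plus i j"] by simp
qed

lemma buildable_times:
  assumes "circuit_ok False gs" "provides gs p" "provides gs q"
  shows "buildable False gs 1 (\<lambda>gs'. provides gs' (p * q))"
proof -
  obtain i j where "i < length gs" "j < length gs" "circuit_vals gs ! i = p" "circuit_vals gs ! j = q"
    using assms(2,3) by (metis provides_nth)
  then show ?thesis using buildable_gate[OF assms(1), of "Times i j"] by simp
qed

text \<open>Multiplying by a leaf costs a fresh copy of the leaf, which keeps the circuit skew.\<close>

lemma buildable_times_leaf:
  assumes "circuit_ok skew gs" "provides gs p" "leaf_poly q"
  shows "buildable skew gs 2 (\<lambda>gs'. provides gs' (p * q))"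
proof -
  obtain g where g: "is_leaf g" "\<And>vs. gate_val vs g = q" using leaf_poly_gate[OF assms(3)] by blast
  obtain i where i: "i < length gs" "circuit_vals gs ! i = p" using assms(2) by (metis provides_nth)
  let ?gs1 = "gs @ [g]"
  have ok1: "circuit_ok skew ?gs1" using circuit_ok_snoc_leaf[OF assms(1) g(1)] .
  have vals1: "circuit_vals ?gs1 ! i = p" "circuit_vals ?gs1 ! length gs = q"
    using i g(2) by (simp_all add: circuit_vals_snoc nth_append)
  have "buildable skew ?gs1 1 (\<lambda>gs'. provides gs' (p * q))"
    using buildable_gate[OF ok1, of "Times i (length gs)"] i vals1 g(1) by (simp add: nth_append)
  then obtain gs' where "prefix ?gs1 gs'" "circuit_ok skew gs'" "length gs' \<le> length gs + 2"
    "provides gs' (p * q)" unfolding buildable_def by auto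
  then show ?thesis unfolding buildable_def by (metis prefix_order.trans prefixI)
qed

lemma buildable_iter:
  assumes "finite X" "circuit_ok skew gs" "P gs"
    and P_prefix: "\<And>gs gs'. P gs \<Longrightarrow> prefix gs gs' \<Longrightarrow> P gs'"
    and Q_prefix: "\<And>x gs gs'. Q x gs \<Longrightarrow> prefix gs gs' \<Longrightarrow> Q x gs'"
    and step: "\<And>x gs. x \<in> X \<Longrightarrow> circuit_ok skew gs \<Longrightarrow> P gs \<Longrightarrow> buildable skew gs C (Q x)"
  shows "buildable skew gs (C * card X) (\<lambda>gs'. P gs' \<and> (\<forall>x\<in>X. Q x gs'))"
  using assms(1-3) step
proof (induction X arbitrary: gs rule: finite_induct)
  case empty
  then show ?case by (auto intro: buildable_refl)
next
  case (insert x X)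
  have "buildable skew gs (C * card X + C) (\<lambda>gs'. P gs' \<and> (\<forall>y\<in>insert x X. Q y gs'))"
  proof (rule buildable_seq)
    show "buildable skew gs (C * card X) (\<lambda>gs'. P gs' \<and> (\<forall>y\<in>X. Q y gs'))"
      using insert by auto
  next
    fix gs1 assume "prefix gs gs1" "circuit_ok skew gs1" "P gs1 \<and> (\<forall>y\<in>X. Q y gs1)"
    then show "buildable skew gs1 C (\<lambda>gs'. P gs' \<and> (\<forall>y\<in>insert x X. Q y gs'))"
      using insert.prems(3)[of x gs1] by (auto elim!: buildable_weaken intro: P_prefix Q_prefix)
  qed
  then show ?case using insert by (simp add: algebra_simps)
qed

lemma buildable_sum_list:
  assumes "circuit_ok skew gs" "\<forall>x\<in>set xs. provides gs (f x)"
  shows "buildable skew gs (length xs + 1) (\<lambda>gs'. provides gs' (\<Sum>x\<leftarrow>xs. f x))"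
  using assms
proof (induction xs arbitrary: gs)
  case Nil
  then show ?case using buildable_leaf[of skew gs 0] by simp
next
  case (Cons x xs)
  have "buildable skew gs ((length xs + 1) + 1) (\<lambda>gs'. provides gs' (f x + (\<Sum>x\<leftarrow>xs. f x)))"
  proof (rule buildable_seq)
    show "buildable skew gs (length xs + 1)
            (\<lambda>gs'. provides gs' (\<Sum>x\<leftarrow>xs. f x) \<and> provides gs' (f x))"
      by (rule buildable_weaken[OF Cons.IH]) (use Cons.prems in \<open>auto intro: provides_prefix\<close>)
  qed (use buildable_plus in blast)
  then show ?case by simp
qed

lemma buildable_prod_list:
  assumes "circuit_ok False gs" "\<forall>x\<in>set xs. provides gs (f x)"
  shows "buildable False gs (length xs + 1) (\<lambda>gs'. provides gs' (\<Prod>x\<leftarrow>xs. f x))"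
  using assms
proof (induction xs arbitrary: gs)
  case Nil
  then show ?case using buildable_leaf[of False gs 1] by simp
next
  case (Cons x xs)
  have "buildable False gs ((length xs + 1) + 1) (\<lambda>gs'. provides gs' (f x * (\<Prod>x\<leftarrow>xs. f x)))"
  proof (rule buildable_seq)
    show "buildable False gs (length xs + 1)
            (\<lambda>gs'. provides gs' (\<Prod>x\<leftarrow>xs. f x) \<and> provides gs' (f x))"
      by (rule buildable_weaken[OF Cons.IH]) (use Cons.prems in \<open>auto intro: provides_prefix\<close>)
  qed (use buildable_times in blast)
  then show ?case by simp
qed

lemma buildable_times_leaves:
  assumes "circuit_ok skew gs" "provides gs p" "\<forall>x\<in>set xs. leaf_poly (f x)"
  shows "buildable skew gs (2 * length xs) (\<lambda>gs'. provides gs' (p * (\<Prod>x\<leftarrow>xs. f x)))"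
  using assms
proof (induction xs arbitrary: gs p)
  case Nil
  then show ?case by (auto intro: buildable_refl)
next
  case (Cons x xs)
  have "buildable skew gs (2 + 2 * length xs) (\<lambda>gs'. provides gs' (p * f x * (\<Prod>x\<leftarrow>xs. f x)))"
    by (rule buildable_seq[OF buildable_times_leaf]) (use Cons in auto)
  then show ?case by (simp add: mult.assoc)
qed

text \<open>The output of a circuit is its last gate, so a provided polynomial p is copied there as p + 0.\<close>

lemma computes_if_buildable:
  assumes "buildable skew gs C (\<lambda>gs'. provides gs' p)"
  shows "\<exists>gs'. computes gs' p \<and> (skew \<longrightarrow> skew_circuit gs') \<and> length gs' \<le> length gs + C + 2"
proof -
  obtain gs1 where gs1: "circuit_ok skew gs1" "length gs1 \<le> length gs + C" "provides gs1 p"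
    using assms unfolding buildable_def by blast
  obtain i where i: "i < length gs1" "circuit_vals gs1 ! i = p" using gs1(3) by (rule provides_nth)
  define gs2 where "gs2 = gs1 @ [Cst 0, Plus i (length gs1)]"
  have "circuit_ok skew ((gs1 @ [Cst 0]) @ [Plus i (length gs1)])"
    by (rule circuit_ok_snoc[OF circuit_ok_snoc_leaf[OF gs1(1)]]) (use i in auto)
  then have "circuit_ok skew gs2" by (simp add: gs2_def)
  moreover have "last (circuit_vals gs2) = p"
    using i by (simp add: gs2_def circuit_vals_snoc[of "gs1 @ [Cst 0]", simplified] circuit_vals_snoc nth_append)
  ultimately show ?thesis using gs1(2)
    by (intro exI[of _ gs2]) (auto simp: gs2_def computes_def wf_circuit_def circuit_ok_def)
qed

section \<open>Sums of products over assignments\<close>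

definition assignments :: "nat \<Rightarrow> nat set \<Rightarrow> (nat \<Rightarrow> nat) set" where
  "assignments N V = {\<phi>. (\<forall>u\<in>V. \<phi> u < N) \<and> (\<forall>u. u \<notin> V \<longrightarrow> \<phi> u = 0)}"

lemma assignments_empty [simp]: "assignments N {} = {\<lambda>_. 0}"
  by (auto simp: assignments_def)

lemma assignments_insert:
  assumes "v \<notin> V"
  shows "assignments N (insert v V) = (\<lambda>(\<psi>, a). \<psi>(v := a)) ` (assignments N V \<times> {..<N})"
proof (intro equalityI subsetI)
  fix \<phi> assume "\<phi> \<in> assignments N (insert v V)"
  then have "(\<phi>(v := 0), \<phi> v) \<in> assignments N V \<times> {..<N}" using assms by (auto simp: assignments_def)
  then show "\<phi> \<in> (\<lambda>(\<psi>, a). \<psi>(v := a)) ` (assignments N V \<times> {..<N})"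
    by (auto intro!: image_eqI[of _ _ "(\<phi>(v := 0), \<phi> v)"])
qed (use assms in \<open>auto simp: assignments_def\<close>)

lemma inj_on_assignments_upd:
  assumes "v \<notin> V"
  shows "inj_on (\<lambda>(\<psi>, a). \<psi>(v := a)) (assignments N V \<times> A)"
proof (rule inj_onI, clarify)
  fix \<psi> a \<psi>' a' assume "\<psi> \<in> assignments N V" "\<psi>' \<in> assignments N V" and eq: "\<psi>(v := a) = \<psi>'(v := a')"
  then have "\<psi> v = \<psi>' v" using assms by (simp add: assignments_def)
  then have "\<psi> u = \<psi>' u" for u using fun_cong[OF eq, of u] by (cases "u = v") auto
  then show "\<psi> = \<psi>' \<and> a = a'" using fun_cong[OF eq, of v] by auto
qed

lemma finite_assignments: "finite V \<Longrightarrow> finite (assignments N V)"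
  by (induction V rule: finite_induct) (simp_all add: assignments_insert)

lemma card_assignments: "finite V \<Longrightarrow> card (assignments N V) = N ^ card V"
proof (induction V rule: finite_induct)
  case (insert v V)
  then show ?case
    by (simp add: assignments_insert card_image[OF inj_on_assignments_upd] card_cartesian_product)
qed simp

lemma card_assignments_le:
  assumes "finite S" "card S \<le> w" shows "card (assignments N S) \<le> (N + 1) ^ w"
proof -
  have "N ^ card S \<le> (N + 1) ^ card S" by (simp add: power_mono)
  also have "\<dots> \<le> (N + 1) ^ w" using assms(2) by (simp add: power_increasing)
  finally show ?thesis using card_assignments[OF assms(1)] by simp
qed

lemma sum_assignments_insert:
  assumes "v \<notin> V" "finite V"
  shows "(\<Sum>\<phi>\<in>assignments N (insert v V). F \<phi>) = (\<Sum>\<psi>\<in>assignments N V. \<Sum>a<N. F (\<psi>(v := a)))"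
proof -
  have "(\<Sum>\<phi>\<in>assignments N (insert v V). F \<phi>) = (\<Sum>(\<psi>, a)\<in>assignments N V \<times> {..<N}. F (\<psi>(v := a)))"
    unfolding assignments_insert[OF assms(1)]
    by (subst sum.reindex[OF inj_on_assignments_upd[OF assms(1)]]) (simp add: comp_def case_prod_unfold)
  then show ?thesis by (simp add: sum.cartesian_product)
qed

text \<open>A factor is a scope together with a function of the assignment that only reads the scope.\<close>

type_synonym 'r factor = "nat set \<times> ((nat \<Rightarrow> nat) \<Rightarrow> 'r)"

definition depends_only :: "nat set \<Rightarrow> ((nat \<Rightarrow> nat) \<Rightarrow> 'b) \<Rightarrow> bool" where
  "depends_only S g \<longleftrightarrow> (\<forall>\<phi> \<psi>. (\<forall>u\<in>S. \<phi> u = \<psi> u) \<longrightarrow> g \<phi> = g \<psi>)"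

abbreviation local_factor :: "'r factor \<Rightarrow> bool" where
  "local_factor f \<equiv> depends_only (fst f) (snd f)"

definition sum_product :: "nat \<Rightarrow> nat set \<Rightarrow> 'r::comm_ring_1 factor list \<Rightarrow> 'r" where
  "sum_product N V fs = (\<Sum>\<phi>\<in>assignments N V. \<Prod>f\<leftarrow>fs. snd f \<phi>)"

definition eliminate :: "nat \<Rightarrow> nat \<Rightarrow> 'r::comm_ring_1 factor list \<Rightarrow> (nat \<Rightarrow> nat) \<Rightarrow> 'r" where
  "eliminate N v fs \<psi> = (\<Sum>a<N. \<Prod>f\<leftarrow>fs. snd f (\<psi>(v := a)))"

lemma sum_product_empty: "sum_product N {} fs = (\<Prod>f\<leftarrow>fs. snd f (\<lambda>_. 0))"
  by (simp add: sum_product_def)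

lemma prod_list_filter_split:
  "(\<Prod>x\<leftarrow>xs. g x) = (\<Prod>x\<leftarrow>filter P xs. g x) * (\<Prod>x\<leftarrow>filter (\<lambda>x. \<not> P x) xs. g x)"
  for g :: "_ \<Rightarrow> 'b::comm_monoid_mult"
  by (induction xs) (auto simp: algebra_simps)

lemma sum_product_partition:
  "sum_product N V fs = sum_product N V (filter P fs @ filter (\<lambda>f. \<not> P f) fs)"
  by (simp add: sum_product_def prod_list_filter_split[of _ fs P])

lemma sum_product_eliminate:
  assumes "finite V" "v \<in> V" "\<forall>f\<in>set fs2. local_factor f \<and> v \<notin> fst f"
  shows "sum_product N V (fs1 @ fs2) = sum_product N (V - {v}) ((S, eliminate N v fs1) # fs2)"
proof -
  have fs2: "(\<Prod>f\<leftarrow>fs2. snd f (\<psi>(v := a))) = (\<Prod>f\<leftarrow>fs2. snd f \<psi>)" for \<psi> a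
    using assms(3) by (intro arg_cong[where f = prod_list] map_cong) (auto simp: depends_only_def)
  have "sum_product N V (fs1 @ fs2) = sum_product N (insert v (V - {v})) (fs1 @ fs2)"
    using assms(2) by (simp add: insert_absorb)
  also have "\<dots> = (\<Sum>\<psi>\<in>assignments N (V - {v}). \<Sum>a<N. \<Prod>f\<leftarrow>fs1 @ fs2. snd f (\<psi>(v := a)))"
    unfolding sum_product_def by (rule sum_assignments_insert) (use assms(1) in auto)
  also have "\<dots> = sum_product N (V - {v}) ((S, eliminate N v fs1) # fs2)"
    by (simp add: sum_product_def eliminate_def fs2 sum_distrib_right)
  finally show ?thesis .
qed

definition elim_scope :: "nat \<Rightarrow> 'r factor list \<Rightarrow> nat set" where
  "elim_scope v fs = (\<Union>f\<in>set fs. fst f) - {v}"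

lemma depends_only_eliminate:
  assumes "\<forall>f\<in>set fs. local_factor f"
  shows "depends_only (elim_scope v fs) (eliminate N v fs)"
  unfolding depends_only_def eliminate_def
proof (intro allI impI)
  fix \<phi> \<psi> :: "nat \<Rightarrow> nat" assume "\<forall>u\<in>elim_scope v fs. \<phi> u = \<psi> u"
  then have "\<forall>u\<in>fst f. (\<phi>(v := a)) u = (\<psi>(v := a)) u" if "f \<in> set fs" for f a
    using that by (auto simp: elim_scope_def)
  then have "snd f (\<phi>(v := a)) = snd f (\<psi>(v := a))" if "f \<in> set fs" for f a
    using assms that unfolding depends_only_def by blast
  then show "(\<Sum>a<N. \<Prod>f\<leftarrow>fs. snd f (\<phi>(v := a))) = (\<Sum>a<N. \<Prod>f\<leftarrow>fs. snd f (\<psi>(v := a)))"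
    by (simp cong: map_cong)
qed

lemma assignments_elim_scope_upd:
  "\<psi> \<in> assignments N (elim_scope v fs) \<Longrightarrow> a < N \<Longrightarrow> f \<in> set fs \<Longrightarrow> \<forall>u\<in>fst f. (\<psi>(v := a)) u < N"
  by (auto simp: assignments_def elim_scope_def)

definition elim_factors :: "nat \<Rightarrow> nat \<Rightarrow> 'r::comm_ring_1 factor list \<Rightarrow> 'r factor list" where
  "elim_factors N v fs =
     (let fs1 = filter (\<lambda>f. v \<in> fst f) fs in (elim_scope v fs1, eliminate N v fs1) # filter (\<lambda>f. v \<notin> fst f) fs)"

lemma sum_product_elim_factors:
  assumes "finite V" "v \<in> V" "\<forall>f\<in>set fs. local_factor f"
  shows "sum_product N V fs = sum_product N (V - {v}) (elim_factors N v fs)"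
  unfolding elim_factors_def Let_def
  by (subst sum_product_partition[where P = "\<lambda>f. v \<in> fst f"], rule sum_product_eliminate) (use assms in auto)

lemma local_elim_factors:
  "\<forall>f\<in>set fs. local_factor f \<Longrightarrow> \<forall>f\<in>set (elim_factors N v fs). local_factor f"
  using depends_only_eliminate[of "filter (\<lambda>f. v \<in> fst f) fs" v N] by (auto simp: elim_factors_def Let_def)

lemma length_elim_factors: "length (elim_factors N v fs) \<le> Suc (length fs)"
  by (simp add: elim_factors_def Let_def le_SucI)

definition tabulated ::
  "nat \<Rightarrow> ('v, 'a::comm_ring_1) gate list \<Rightarrow> nat set \<Rightarrow> ((nat \<Rightarrow> nat) \<Rightarrow> ('v, 'a) mpoly) \<Rightarrow> bool" where
  "tabulated N gs S g \<longleftrightarrow> (\<forall>\<phi>\<in>assignments N S. provides gs (g \<phi>))"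

lemma tabulated_prefix: "tabulated N gs S g \<Longrightarrow> prefix gs gs' \<Longrightarrow> tabulated N gs' S g"
  unfolding tabulated_def using provides_prefix by blast

lemma tabulated_provides:
  assumes "tabulated N gs S g" "depends_only S g" "\<forall>u\<in>S. \<phi> u < N"
  shows "provides gs (g \<phi>)"
proof -
  let ?\<phi>S = "\<lambda>u. if u \<in> S then \<phi> u else 0"
  have "?\<phi>S \<in> assignments N S" using assms(3) by (simp add: assignments_def)
  then have "provides gs (g ?\<phi>S)" using assms(1) by (simp add: tabulated_def)
  moreover have "g ?\<phi>S = g \<phi>" using assms(2) by (simp add: depends_only_def)
  ultimately show ?thesis by simp
qed

text \<open>Tabulating an eliminated factor on a scope of at most w vertices: N products per entry,
  summed up, for each of the at most (N + 1)^w assignments of the scope.\<close>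

lemma buildable_tabulate_eliminate:
  assumes "circuit_ok skew gs" "P gs" and P_prefix: "\<And>gs gs'. P gs \<Longrightarrow> prefix gs gs' \<Longrightarrow> P gs'"
    and "finite S" "card S \<le> w"
    and product: "\<And>\<psi> a gs. \<psi> \<in> assignments N S \<Longrightarrow> a < N \<Longrightarrow> circuit_ok skew gs \<Longrightarrow> P gs
        \<Longrightarrow> buildable skew gs C (\<lambda>gs'. provides gs' (\<Prod>f\<leftarrow>fs. snd f (\<psi>(v := a))))"
  shows "buildable skew gs ((N + 1) ^ w * (N * C + N + 1))
           (\<lambda>gs'. P gs' \<and> tabulated N gs' S (eliminate N v fs))"
proof -
  let ?g = "\<lambda>\<psi> a. \<Prod>f\<leftarrow>fs. snd f (\<psi>(v := a))"
  have "buildable skew gs ((N * C + N + 1) * card (assignments N S))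
          (\<lambda>gs'. P gs' \<and> (\<forall>\<psi>\<in>assignments N S. provides gs' (eliminate N v fs \<psi>)))"
  proof (rule buildable_iter)
    fix \<psi> gs assume \<psi>: "\<psi> \<in> assignments N S" and gs: "circuit_ok skew gs" "P gs"
    have "buildable skew gs (C * card {..<N} + (length [0..<N] + 1))
            (\<lambda>gs'. provides gs' (\<Sum>a\<leftarrow>[0..<N]. ?g \<psi> a))"
    proof (rule buildable_seq)
      show "buildable skew gs (C * card {..<N}) (\<lambda>gs'. P gs' \<and> (\<forall>a\<in>{..<N}. provides gs' (?g \<psi> a)))"
        by (rule buildable_iter) (use gs \<psi> product P_prefix provides_prefix in auto)
    next
      fix gs1 assume "circuit_ok skew gs1" "P gs1 \<and> (\<forall>a\<in>{..<N}. provides gs1 (?g \<psi> a))"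
      then show "buildable skew gs1 (length [0..<N] + 1) (\<lambda>gs'. provides gs' (\<Sum>a\<leftarrow>[0..<N]. ?g \<psi> a))"
        by (intro buildable_sum_list) auto
    qed
    then show "buildable skew gs (N * C + N + 1) (\<lambda>gs'. provides gs' (eliminate N v fs \<psi>))"
      by (simp add: eliminate_def atLeast_upt sum_list_distinct_conv_sum_set algebra_simps)
  qed (use assms finite_assignments provides_prefix in auto)
  moreover have "(N * C + N + 1) * card (assignments N S) \<le> (N + 1) ^ w * (N * C + N + 1)"
    by (subst mult.commute) (rule mult_le_mono2[OF card_assignments_le[OF assms(4,5)]])
  ultimately show ?thesis unfolding tabulated_def by (rule buildable_mono)
qed

section \<open>Tree decompositions and elimination orders\<close>

definition tree_on :: "nat set \<Rightarrow> nat set set \<Rightarrow> bool" where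
  "tree_on T TE \<longleftrightarrow> finite T \<and> T \<noteq> {} \<and> (\<forall>e\<in>TE. \<exists>a b. a \<noteq> b \<and> a \<in> T \<and> b \<in> T \<and> e = {a, b})
     \<and> connected_in TE T \<and> \<not> has_cycle TE"

text \<open>A tree decomposition with node set T of the hypergraph with vertex set V and hyperedges Sc:
  during variable elimination the hyperedges are the scopes of the current factors.\<close>

definition tree_decomposition_of ::
  "nat set \<Rightarrow> nat set set \<Rightarrow> nat set \<Rightarrow> (nat \<Rightarrow> nat set) \<Rightarrow> nat set set \<Rightarrow> bool" where
  "tree_decomposition_of T TE V B Sc \<longleftrightarrow> tree_on T TE \<and> (\<forall>t\<in>T. B t \<subseteq> V) \<and> (\<forall>v\<in>V. \<exists>t\<in>T. v \<in> B t)
     \<and> (\<forall>S\<in>Sc. \<exists>t\<in>T. S \<subseteq> B t) \<and> (\<forall>v\<in>V. connected_in TE {t\<in>T. v \<in> B t})"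

lemma adj_sym: "adj E x y = adj E y x"
  by (auto simp: adj_def insert_commute)

lemma has_cycle_mono: "has_cycle E' \<Longrightarrow> E' \<subseteq> E \<Longrightarrow> has_cycle E"
  unfolding has_cycle_def adj_def by blast

text \<open>Here l is a leaf with neighbour l', or not adjacent to anything at all.\<close>

lemma connected_in_remove_leaf:
  assumes conn: "connected_in TE S" and leaf: "\<forall>y. adj TE l y \<longrightarrow> y = l'" and "l \<in> S \<longrightarrow> l' \<in> S"
  shows "connected_in {e\<in>TE. l \<notin> e} (S - {l})"
  unfolding connected_in_def
proof (intro ballI)
  fix x y assume x: "x \<in> S - {l}" and y: "y \<in> S - {l}"
  let ?R = "{(a, b). a \<in> S \<and> b \<in> S \<and> adj TE a b}"
  let ?R' = "{(a, b). a \<in> S - {l} \<and> b \<in> S - {l} \<and> adj {e\<in>TE. l \<notin> e} a b}"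
  have "(x, z) \<in> ?R\<^sup>* \<Longrightarrow> (z \<noteq> l \<longrightarrow> (x, z) \<in> ?R'\<^sup>*) \<and> (z = l \<longrightarrow> (x, l') \<in> ?R'\<^sup>*)" for z
  proof (induction rule: rtrancl_induct)
    case (step z z')
    then have zz': "z \<in> S" "z' \<in> S" "adj TE z z'" "z \<noteq> z'" by (auto simp: adj_def)
    consider "z = l" | "z' = l" | "z \<noteq> l" "z' \<noteq> l" using zz'(4) by blast
    then show ?case
    proof cases
      case 1
      then have "z' = l'" using leaf zz'(3) by blast
      then show ?thesis using 1 step.IH zz'(4) by auto
    next
      case 2
      then have "z = l'" using leaf zz'(3) adj_sym by metis
      then show ?thesis using 2 step.IH zz'(4) by auto
    next
      case 3
      then have "(z, z') \<in> ?R'" using zz' by (auto simp: adj_def)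
      then show ?thesis using 3 step.IH by (meson rtrancl.rtrancl_into_rtrancl)
    qed
  qed (use x in auto)
  moreover have "(x, y) \<in> ?R\<^sup>*" using conn x y by (auto simp: connected_in_def)
  ultimately show "(x, y) \<in> ?R'\<^sup>*" using y by auto
qed

lemma tree_on_remove_leaf:
  assumes "tree_on T TE" "l \<in> T" "l' \<in> T" "l \<noteq> l'" "\<forall>y. adj TE l y \<longrightarrow> y = l'"
  shows "tree_on (T - {l}) {e\<in>TE. l \<notin> e}"
proof -
  have "connected_in {e\<in>TE. l \<notin> e} (T - {l})"
    using connected_in_remove_leaf[of TE T l l'] assms by (auto simp: tree_on_def)
  moreover have "\<not> has_cycle {e\<in>TE. l \<notin> e}"
    using assms(1) has_cycle_mono[of "{e\<in>TE. l \<notin> e}" TE] by (auto simp: tree_on_def)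
  moreover have "\<exists>a b. a \<noteq> b \<and> a \<in> T - {l} \<and> b \<in> T - {l} \<and> e = {a, b}" if "e \<in> TE" "l \<notin> e" for e
    using assms(1) that unfolding tree_on_def by fastforce
  moreover have "T - {l} \<noteq> {}" using assms(2-4) by blast
  ultimately show ?thesis using assms(1) unfolding tree_on_def by auto
qed

lemma rtrancl_first_step: "(x, y) \<in> R\<^sup>* \<Longrightarrow> x \<noteq> y \<Longrightarrow> \<exists>z. (x, z) \<in> R"
  by (erule converse_rtranclE) auto

lemma connected_in_leaf_neighbour:
  assumes "connected_in TE S" "l \<in> S" "s \<in> S" "s \<noteq> l" "\<forall>y. adj TE l y \<longrightarrow> y = l'"
  shows "l' \<in> S"
proof -
  have "(l, s) \<in> {(a, b). a \<in> S \<and> b \<in> S \<and> adj TE a b}\<^sup>*"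
    using assms(1-3) unfolding connected_in_def by simp
  from rtrancl_first_step[OF this] obtain z where "(l, z) \<in> {(a, b). a \<in> S \<and> b \<in> S \<and> adj TE a b}"
    using assms(4) by blast
  then show ?thesis using assms(5) by auto
qed

definition simple_path :: "nat set \<Rightarrow> nat set set \<Rightarrow> nat list \<Rightarrow> bool" where
  "simple_path T TE cs \<longleftrightarrow> distinct cs \<and> set cs \<subseteq> T \<and> 2 \<le> length cs
      \<and> (\<forall>i. Suc i < length cs \<longrightarrow> adj TE (cs ! i) (cs ! Suc i))"

text \<open>A neighbour q of the start of a longest path cs either extends it (if q is not on cs) or
  closes a cycle with an initial segment of cs (unless q is the second vertex).\<close>

lemma longest_path_start_is_leaf:
  assumes tree: "tree_on T TE" and cs: "simple_path T TE cs"
    and longest: "\<forall>ds. simple_path T TE ds \<longrightarrow> length ds \<le> length cs"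
    and q: "adj TE (cs ! 0) q"
  shows "q = cs ! 1"
proof (rule ccontr)
  assume q1: "q \<noteq> cs ! 1"
  have cs_adj: "\<And>i. Suc i < length cs \<Longrightarrow> adj TE (cs ! i) (cs ! Suc i)"
    and cs2: "2 \<le> length cs" "distinct cs" using cs by (auto simp: simple_path_def)
  show False
  proof (cases "q \<in> set cs")
    case False
    have "q \<in> T" using q tree unfolding tree_on_def adj_def by (metis doubleton_eq_iff)
    moreover have "adj TE ((q # cs) ! i) ((q # cs) ! Suc i)" if "Suc i < length (q # cs)" for i
      using that cs_adj[of "i - 1"] q adj_sym by (cases i) auto
    ultimately have "simple_path T TE (q # cs)" using cs False by (auto simp: simple_path_def)
    then show False using longest by fastforce
  next
    case True
    then obtain i where i: "i < length cs" "cs ! i = q" by (auto simp: in_set_conv_nth)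
    have "i \<noteq> 0"
    proof
      assume "i = 0"
      then show False using q i by (simp add: adj_def)
    qed
    moreover have "i \<noteq> 1" using q1 i by auto
    ultimately have i2: "2 \<le> i" by linarith
    let ?cyc = "take (Suc i) cs"
    have "last ?cyc = q" using i by (simp add: take_Suc_conv_app_nth)
    have "hd ?cyc = cs ! 0" using i by (cases cs) auto
    have "has_cycle TE"
      unfolding has_cycle_def
    proof (intro exI[of _ ?cyc] conjI allI impI)
      show "3 \<le> length ?cyc" "distinct ?cyc" using i i2 cs2 by auto
      show "adj TE (?cyc ! j) (?cyc ! Suc j)" if "Suc j < length ?cyc" for j
        using that cs_adj[of j] i by auto
      show "adj TE (last ?cyc) (hd ?cyc)" using \<open>last ?cyc = q\<close> \<open>hd ?cyc = cs ! 0\<close> q adj_sym by metis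
    qed
    then show False using tree by (auto simp: tree_on_def)
  qed
qed

lemma tree_has_leaf:
  assumes tree: "tree_on T TE" and "2 \<le> card T"
  obtains l l' where "l \<in> T" "l' \<in> T" "l \<noteq> l'" "\<forall>y. adj TE l y \<longrightarrow> y = l'"
proof -
  have fin: "finite T" using tree by (auto simp: tree_on_def)
  have "\<not> card T \<le> Suc 0" using assms(2) by simp
  then obtain x y where xy: "x \<in> T" "y \<in> T" "x \<noteq> y" using card_le_Suc0_iff_eq[OF fin] by blast
  have "(x, y) \<in> {(a, b). a \<in> T \<and> b \<in> T \<and> adj TE a b}\<^sup>*"
    using tree xy by (auto simp: tree_on_def connected_in_def)
  from rtrancl_first_step[OF this xy(3)] obtain z where "(x, z) \<in> {(a, b). a \<in> T \<and> b \<in> T \<and> adj TE a b}"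
    by blast
  then have "simple_path T TE [x, z]" by (auto simp: simple_path_def adj_def less_Suc_eq)
  moreover have "\<forall>cs. simple_path T TE cs \<longrightarrow> length cs < Suc (card T)"
    using fin by (auto simp: simple_path_def less_Suc_eq_le intro: card_mono dest!: distinct_card[symmetric])
  ultimately obtain cs where cs: "simple_path T TE cs"
    and longest: "\<forall>ds. simple_path T TE ds \<longrightarrow> length ds \<le> length cs"
    using ex_has_greatest_nat[of "simple_path T TE" _ length] by blast
  then have "cs ! 0 \<in> T" "cs ! 1 \<in> T" "cs ! 0 \<noteq> cs ! 1"
    unfolding simple_path_def by (auto intro!: nth_mem[THEN subsetD[rotated]]) (subst (asm) nth_eq_iff_index_eq, auto)
  then show ?thesis using that longest_path_start_is_leaf[OF tree cs longest] by blast
qed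

lemma tree_decomposition_ofD:
  assumes "tree_decomposition_of T TE V B Sc"
  shows "tree_on T TE" "\<And>t. t \<in> T \<Longrightarrow> B t \<subseteq> V" "\<And>v. v \<in> V \<Longrightarrow> \<exists>t\<in>T. v \<in> B t"
    "\<And>S. S \<in> Sc \<Longrightarrow> \<exists>t\<in>T. S \<subseteq> B t" "\<And>v. v \<in> V \<Longrightarrow> connected_in TE {t\<in>T. v \<in> B t}"
  using assms unfolding tree_decomposition_of_def by auto

lemma tree_decomposition_of_remove_leaf:
  assumes dec: "tree_decomposition_of T TE V B Sc"
    and l: "l \<in> T" "l' \<in> T" "l \<noteq> l'" "\<forall>y. adj TE l y \<longrightarrow> y = l'" and "B l \<subseteq> B l'"
  shows "tree_decomposition_of (T - {l}) {e\<in>TE. l \<notin> e} V B Sc"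
  unfolding tree_decomposition_of_def
proof (intro conjI ballI)
  note D = tree_decomposition_ofD[OF dec]
  show "tree_on (T - {l}) {e\<in>TE. l \<notin> e}" using tree_on_remove_leaf[OF D(1) l] .
  show "B t \<subseteq> V" if "t \<in> T - {l}" for t using D(2) that by auto
  fix v assume v: "v \<in> V"
  show "\<exists>t\<in>T - {l}. v \<in> B t" using D(3)[OF v] l(2,3) \<open>B l \<subseteq> B l'\<close> by auto
  have "connected_in {e\<in>TE. l \<notin> e} ({t\<in>T. v \<in> B t} - {l})"
    using connected_in_remove_leaf[OF D(5)[OF v] l(4)] l(2) \<open>B l \<subseteq> B l'\<close> by auto
  moreover have "{t\<in>T. v \<in> B t} - {l} = {t\<in>T - {l}. v \<in> B t}" by auto
  ultimately show "connected_in {e\<in>TE. l \<notin> e} {t\<in>T - {l}. v \<in> B t}" by simp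
next
  fix S assume "S \<in> Sc"
  then obtain s where "s \<in> T" "S \<subseteq> B s" using tree_decomposition_ofD(4)[OF dec] by blast
  then show "\<exists>t\<in>T - {l}. S \<subseteq> B t" using l(2,3) \<open>B l \<subseteq> B l'\<close> by (cases "s = l") auto
qed

text \<open>Some vertex v occurs in a single bag B t together with all scopes containing v: if a leaf
  bag is not contained in the bag of its neighbour, it has such a vertex; otherwise drop the leaf.\<close>

lemma tree_decomposition_of_eliminable_vertex:
  assumes "tree_decomposition_of T TE V B Sc" "V \<noteq> {}"
  shows "\<exists>v\<in>V. \<exists>t\<in>T. v \<in> B t \<and> (\<forall>S\<in>Sc. v \<in> S \<longrightarrow> S \<subseteq> B t)"
  using assms
proof (induction "card T" arbitrary: T TE rule: less_induct)
  case less
  note D = tree_decomposition_ofD[OF less.prems(1)]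
  have fin: "finite T" "T \<noteq> {}" using D(1) by (auto simp: tree_on_def)
  show ?case
  proof (cases "card T < 2")
    case True
    then have "card T = 1" using fin by (simp add: less_2_cases_iff)
    then obtain t where T: "T = {t}" by (rule card_1_singletonE)
    obtain v where "v \<in> V" using less.prems(2) by auto
    moreover have "v \<in> B t" using D(3)[OF \<open>v \<in> V\<close>] T by auto
    moreover have "\<forall>S\<in>Sc. S \<subseteq> B t" using D(4) T by auto
    ultimately show ?thesis using T by auto
  next
    case False
    then obtain l l' where l: "l \<in> T" "l' \<in> T" "l \<noteq> l'" "\<forall>y. adj TE l y \<longrightarrow> y = l'"
      using tree_has_leaf[OF D(1)] by (metis not_less)
    show ?thesis
    proof (cases "B l \<subseteq> B l'")
      case False
      then obtain v where v: "v \<in> B l" "v \<notin> B l'" by auto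
      have "v \<in> V" using v D(2)[OF l(1)] by auto
      have only_l: "s = l" if "s \<in> T" "v \<in> B s" for s
      proof (rule ccontr)
        assume "s \<noteq> l"
        have "l \<in> {t\<in>T. v \<in> B t}" "s \<in> {t\<in>T. v \<in> B t}" using l(1) v(1) that by auto
        then have "l' \<in> {t\<in>T. v \<in> B t}"
          using connected_in_leaf_neighbour[OF D(5)[OF \<open>v \<in> V\<close>] _ _ \<open>s \<noteq> l\<close> l(4)] by blast
        then show False using v by auto
      qed
      have "\<forall>S\<in>Sc. v \<in> S \<longrightarrow> S \<subseteq> B l" using D(4) only_l by blast
      then show ?thesis using \<open>v \<in> V\<close> l(1) v(1) by blast
    next
      case True
      have "card (T - {l}) < card T" using fin(1) l(1) by (rule card_Diff1_less)
      then show ?thesis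
        using less.hyps[OF _ tree_decomposition_of_remove_leaf[OF less.prems(1) l True] less.prems(2)]
        by blast
    qed
  qed
qed

lemma tree_decomposition_of_delete_vertex:
  assumes dec: "tree_decomposition_of T TE V B Sc" and "t \<in> T"
    and Sc': "\<forall>S\<in>Sc'. (S \<in> Sc \<and> v \<notin> S) \<or> S \<subseteq> B t - {v}"
  shows "tree_decomposition_of T TE (V - {v}) (\<lambda>s. B s - {v}) Sc'"
proof -
  note D = tree_decomposition_ofD[OF dec]
  have "\<exists>s\<in>T. S \<subseteq> B s - {v}" if "S \<in> Sc'" for S
  proof (cases "S \<subseteq> B t - {v}")
    case False
    then have "S \<in> Sc" "v \<notin> S" using Sc' that by auto
    then show ?thesis using D(4) by blast
  qed (use \<open>t \<in> T\<close> in blast)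
  moreover have "{s\<in>T. u \<in> B s - {v}} = {s\<in>T. u \<in> B s}" if "u \<noteq> v" for u
    using that by auto
  ultimately show ?thesis using D unfolding tree_decomposition_of_def by auto
qed

section \<open>Variable elimination along a tree decomposition\<close>

lemma tree_decomposition_of_elim_factors:
  assumes dec: "tree_decomposition_of T TE V B (fst ` set fs)" and "finite V" "t \<in> T" "card (B t) \<le> w"
    and sub: "\<forall>S\<in>fst ` set fs. v \<in> S \<longrightarrow> S \<subseteq> B t"
  shows "finite (elim_scope v (filter (\<lambda>f. v \<in> fst f) fs))"
    and "card (elim_scope v (filter (\<lambda>f. v \<in> fst f) fs)) \<le> w"
    and "tree_decomposition_of T TE (V - {v}) (\<lambda>s. B s - {v}) (fst ` set (elim_factors N v fs))"
proof -
  have scope: "elim_scope v (filter (\<lambda>f. v \<in> fst f) fs) \<subseteq> B t"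
    using sub by (auto simp: elim_scope_def)
  moreover have "finite (B t)"
    using tree_decomposition_ofD(2)[OF dec \<open>t \<in> T\<close>] \<open>finite V\<close> by (rule finite_subset)
  ultimately show "finite (elim_scope v (filter (\<lambda>f. v \<in> fst f) fs))"
    and "card (elim_scope v (filter (\<lambda>f. v \<in> fst f) fs)) \<le> w"
    using \<open>card (B t) \<le> w\<close> by (auto intro: finite_subset order_trans[OF card_mono])
  show "tree_decomposition_of T TE (V - {v}) (\<lambda>s. B s - {v}) (fst ` set (elim_factors N v fs))"
    by (rule tree_decomposition_of_delete_vertex[OF dec \<open>t \<in> T\<close>])
      (use sub in \<open>auto simp: elim_factors_def Let_def elim_scope_def\<close>)
qed

lemma buildable_prod_tabulated:
  assumes "circuit_ok False gs" "\<forall>f\<in>set fs. local_factor f \<and> tabulated N gs (fst f) (snd f)"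
    and "\<forall>f\<in>set fs. \<forall>u\<in>fst f. \<phi> u < N"
  shows "buildable False gs (length fs + 1) (\<lambda>gs'. provides gs' (\<Prod>f\<leftarrow>fs. snd f \<phi>))"
proof -
  have "provides gs (snd f \<phi>)" if "f \<in> set fs" for f
    using tabulated_provides[of N gs "fst f" "snd f" \<phi>] assms(2,3) that by blast
  then show ?thesis using buildable_prod_list[OF assms(1), of fs "\<lambda>f. snd f \<phi>"] by blast
qed

lemma buildable_tabulate_elim_factors:
  fixes fs :: "('v, 'a::comm_ring_1) mpoly factor list"
  assumes "circuit_ok False gs" "\<forall>f\<in>set fs. local_factor f \<and> tabulated N gs (fst f) (snd f)"
    and "finite (elim_scope v (filter (\<lambda>f. v \<in> fst f) fs))"
    and "card (elim_scope v (filter (\<lambda>f. v \<in> fst f) fs)) \<le> w"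
  shows "buildable False gs ((N + 1) ^ w * (N * (length fs + 1) + N + 1))
           (\<lambda>gs'. \<forall>f\<in>set (elim_factors N v fs). tabulated N gs' (fst f) (snd f))"
proof -
  define fs1 where "fs1 = filter (\<lambda>f. v \<in> fst f) fs"
  have "buildable False gs ((N + 1) ^ w * (N * (length fs1 + 1) + N + 1))
      (\<lambda>gs'. (\<forall>f\<in>set fs. tabulated N gs' (fst f) (snd f)) \<and> tabulated N gs' (elim_scope v fs1) (eliminate N v fs1))"
  proof (rule buildable_tabulate_eliminate[OF assms(1) _ _ assms(3,4)[folded fs1_def]])
    fix \<psi> a gs' assume \<psi>: "\<psi> \<in> assignments N (elim_scope v fs1)" "a < N" and "circuit_ok False gs'"
      and "\<forall>f\<in>set fs. tabulated N gs' (fst f) (snd f)"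
    moreover have "\<forall>f\<in>set fs1. \<forall>u\<in>fst f. (\<psi>(v := a)) u < N"
      using assignments_elim_scope_upd[OF \<psi>] by blast
    ultimately show "buildable False gs' (length fs1 + 1) (\<lambda>gs''. provides gs'' (\<Prod>f\<leftarrow>fs1. snd f (\<psi>(v := a))))"
      using assms(2) by (intro buildable_prod_tabulated) (auto simp: fs1_def)
  qed (use assms(2) in \<open>fastforce intro: tabulated_prefix\<close>)+
  moreover have "(N + 1) ^ w * (N * (length fs1 + 1) + N + 1) \<le> (N + 1) ^ w * (N * (length fs + 1) + N + 1)"
    using length_filter_le[of "\<lambda>f. v \<in> fst f" fs] by (simp add: fs1_def)
  ultimately show ?thesis by (rule buildable_mono) (auto simp: elim_factors_def Let_def fs1_def)
qed

text \<open>The bound length fs + card V \<le> L survives each elimination, which removes one vertex and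
  adds at most one factor.\<close>

lemma buildable_sum_product_tree:
  fixes fs :: "('v, 'a::comm_ring_1) mpoly factor list"
  assumes "finite V" "tree_decomposition_of T TE V B (fst ` set fs)" "\<forall>t\<in>T. card (B t) \<le> w"
    and "\<forall>f\<in>set fs. local_factor f \<and> tabulated N gs (fst f) (snd f)"
    and "circuit_ok False gs" "length fs + card V \<le> L"
  shows "buildable False gs (card V * ((N + 1) ^ w * (N * (L + 1) + N + 1)) + (L + 1))
           (\<lambda>gs'. provides gs' (sum_product N V fs))"
  using assms
proof (induction "card V" arbitrary: V B fs gs)
  case 0
  then have "V = {}" by simp
  then have "\<forall>f\<in>set fs. fst f = {}" using tree_decomposition_ofD(2,4)[OF "0.prems"(2)] by blast
  then have "buildable False gs (length fs + 1) (\<lambda>gs'. provides gs' (sum_product N V fs))"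
    using buildable_prod_tabulated[OF "0.prems"(5,4)] \<open>V = {}\<close> by (simp add: sum_product_empty)
  then show ?case by (rule buildable_mono) (use "0.prems"(6) in auto)
next
  case (Suc c)
  let ?X = "(N + 1) ^ w * (N * (L + 1) + N + 1)"
  obtain v t where v: "v \<in> V" and t: "t \<in> T" "v \<in> B t"
    and sub: "\<forall>S\<in>fst ` set fs. v \<in> S \<longrightarrow> S \<subseteq> B t"
    using tree_decomposition_of_eliminable_vertex[OF Suc.prems(2)] Suc.hyps(2) by force
  have cV: "card (V - {v}) = c" using Suc.hyps(2) Suc.prems(1) v by simp
  have "card (B t) \<le> w" using Suc.prems(3) t(1) by blast
  note elim = tree_decomposition_of_elim_factors[OF Suc.prems(2,1) t(1) this sub]
  have first: "buildable False gs ?X (\<lambda>gs'. \<forall>f\<in>set (elim_factors N v fs). tabulated N gs' (fst f) (snd f))"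
    by (rule buildable_mono[OF buildable_tabulate_elim_factors[OF Suc.prems(5,4) elim(1,2)]])
      (use Suc.prems(6) in auto)
  have B: "buildable False gs (?X + (c * ?X + (L + 1))) (\<lambda>gs'. provides gs' (sum_product N V fs))"
  proof (rule buildable_seq[OF first])
    fix gs1 assume gs1: "circuit_ok False gs1" "\<forall>f\<in>set (elim_factors N v fs). tabulated N gs1 (fst f) (snd f)"
    have "buildable False gs1 (card (V - {v}) * ?X + (L + 1))
        (\<lambda>gs'. provides gs' (sum_product N (V - {v}) (elim_factors N v fs)))"
    proof (rule Suc.hyps(1)[of "V - {v}" "\<lambda>s. B s - {v}"])
      show "c = card (V - {v})" "finite (V - {v})" using Suc.hyps(2) Suc.prems(1) v by auto
      show "tree_decomposition_of T TE (V - {v}) (\<lambda>s. B s - {v}) (fst ` set (elim_factors N v fs))"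
        by (rule elim(3))
      show "\<forall>s\<in>T. card (B s - {v}) \<le> w" using Suc.prems(3) by (meson card_Diff1_le le_trans)
      show "\<forall>f\<in>set (elim_factors N v fs). local_factor f \<and> tabulated N gs1 (fst f) (snd f)"
        using local_elim_factors[of fs N v] Suc.prems(4) gs1(2) by blast
      show "length (elim_factors N v fs) + card (V - {v}) \<le> L"
        using length_elim_factors[of N v fs] Suc.prems(1,6) Suc.hyps(2) v by simp
    qed (rule gs1(1))
    then show "buildable False gs1 (c * ?X + (L + 1)) (\<lambda>gs'. provides gs' (sum_product N V fs))"
      using cV Suc.prems(1,4) v by (simp add: sum_product_elim_factors)
  qed
  have "?X + (c * ?X + (L + 1)) = card V * ?X + (L + 1)"
    using Suc.hyps(2)[symmetric] by simp
  then show ?case using B by (simp only:)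
qed

section \<open>Variable elimination along a path decomposition\<close>

definition last_bag :: "nat \<Rightarrow> (nat \<Rightarrow> nat set) \<Rightarrow> nat \<Rightarrow> nat" where
  "last_bag k B u = Max {t. t < k \<and> u \<in> B t}"

definition min_last_bag :: "nat \<Rightarrow> (nat \<Rightarrow> nat set) \<Rightarrow> nat set \<Rightarrow> nat" where
  "min_last_bag k B V = Min (last_bag k B ` V)"

lemma last_bag:
  assumes "path_decomposition n E k B" "u < n"
  shows "last_bag k B u < k" "u \<in> B (last_bag k B u)"
proof -
  have "\<forall>v<n. \<exists>t<k. v \<in> B t" using assms(1) unfolding path_decomposition_def by (elim conjE) assumption
  then have "{t. t < k \<and> u \<in> B t} \<noteq> {}" using assms(2) by auto
  then have "last_bag k B u \<in> {t. t < k \<and> u \<in> B t}" unfolding last_bag_def by (intro Max_in) auto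
  then show "last_bag k B u < k" "u \<in> B (last_bag k B u)" by auto
qed

lemma last_bag_ge: "s < k \<Longrightarrow> u \<in> B s \<Longrightarrow> s \<le> last_bag k B u"
  unfolding last_bag_def by (rule Max_ge) auto

lemma min_last_bag_le: "finite V \<Longrightarrow> u \<in> V \<Longrightarrow> min_last_bag k B V \<le> last_bag k B u"
  unfolding min_last_bag_def by (rule Min_le) auto

lemma min_last_bag_attained:
  "finite V \<Longrightarrow> V \<noteq> {} \<Longrightarrow> \<exists>v\<in>V. last_bag k B v = min_last_bag k B V"
proof -
  assume "finite V" "V \<noteq> {}"
  then have "Min (last_bag k B ` V) \<in> last_bag k B ` V" by (intro Min_in) auto
  then show ?thesis unfolding min_last_bag_def by auto
qed

lemma path_decomposition_covers:
  "path_decomposition n E k B \<Longrightarrow> (\<forall>v<n. \<exists>t<k. v \<in> B t) \<and> (\<forall>e\<in>E. \<exists>t<k. e \<subseteq> B t)"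
  unfolding path_decomposition_def by (elim conjE) (intro conjI)

lemma path_decomposition_bag: "path_decomposition n E k B \<Longrightarrow> t < k \<Longrightarrow> B t \<subseteq> {0..<n}"
  unfolding path_decomposition_def by (elim conjE) blast

lemma path_decomposition_interval:
  "path_decomposition n E k B \<Longrightarrow> i \<le> l \<Longrightarrow> l \<le> j \<Longrightarrow> j < k \<Longrightarrow> u \<in> B i \<Longrightarrow> u \<in> B j \<Longrightarrow> u \<in> B l"
  unfolding path_decomposition_def by (elim conjE) blast

text \<open>Eliminate a vertex v whose last bag comes first. Every scope containing v meets the bag
  min_last_bag V: a vertex u of such a scope lies in an earlier bag together with v and is still
  present in its own later last bag, hence, by the interval property, in every bag in between.
  So the new scope lies in that bag, and for the same reason also in min_last_bag (V - {v}).\<close>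

lemma path_elim_scope:
  assumes pd: "path_decomposition n E k B" and V: "finite V" "V \<subseteq> {0..<n}"
    and v: "v \<in> V" "last_bag k B v = min_last_bag k B V"
    and SD: "SD \<subseteq> V" "SD \<subseteq> B (min_last_bag k B V)"
    and I: "\<forall>f\<in>set I. fst f \<subseteq> V \<and> (\<exists>s<k. fst f \<subseteq> B s)" and w: "\<forall>t<k. card (B t) \<le> w"
    and S_def: "S = elim_scope v ((SD, D) # filter (\<lambda>f. v \<in> fst f) I)"
  shows "finite S" "card S \<le> w" "S \<subseteq> V - {v}"
    and "V - {v} \<noteq> {} \<Longrightarrow> S \<subseteq> B (min_last_bag k B (V - {v}))"
proof -
  let ?m = "min_last_bag k B V"
  have in_last: "u < n \<Longrightarrow> u \<in> B (last_bag k B u)" and last_k: "u < n \<Longrightarrow> last_bag k B u < k" for u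
    using last_bag[OF pd] by auto
  have "v < n" using v(1) V(2) by auto
  then have "?m < k" using last_k[OF \<open>v < n\<close>] v(2) by simp
  show SV: "S \<subseteq> V - {v}" using SD I by (auto simp: S_def elim_scope_def)
  have Sm: "S \<subseteq> B ?m"
  proof
    fix u assume "u \<in> S"
    then consider "u \<in> SD" | f where "f \<in> set I" "v \<in> fst f" "u \<in> fst f"
      by (auto simp: S_def elim_scope_def)
    then show "u \<in> B ?m"
    proof cases
      case 2
      obtain s where s: "s < k" "fst f \<subseteq> B s" using I 2(1) by blast
      have "u \<in> V" using I 2 by blast
      have "v \<in> B s" using s(2) 2(2) by blast
      then have sm: "s \<le> ?m" using last_bag_ge[OF s(1), of v B] v(2) by simp
      have mu: "?m \<le> last_bag k B u" using min_last_bag_le[OF V(1) \<open>u \<in> V\<close>] .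
      have un: "u < n" using \<open>u \<in> V\<close> V(2) by auto
      have "u \<in> B s" using s(2) 2(3) by blast
      from path_decomposition_interval[OF pd sm mu last_k[OF un] this in_last[OF un]]
      show ?thesis .
    qed (use SD in blast)
  qed
  have "finite (B ?m)" using path_decomposition_bag[OF pd \<open>?m < k\<close>] finite_subset by blast
  then show "finite S" "card S \<le> w"
    using Sm w \<open>?m < k\<close> by (auto intro: finite_subset order_trans[OF card_mono])
  assume ne: "V - {v} \<noteq> {}"
  show "S \<subseteq> B (min_last_bag k B (V - {v}))"
  proof
    fix u assume u: "u \<in> S"
    then have "u \<in> V - {v}" using SV by blast
    obtain v' where v': "v' \<in> V - {v}" "last_bag k B v' = min_last_bag k B (V - {v})"
      using min_last_bag_attained[of "V - {v}"] V(1) ne by blast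
    have "?m \<le> last_bag k B v'" by (rule min_last_bag_le[OF V(1)]) (use v' in auto)
    then have m: "?m \<le> min_last_bag k B (V - {v})" using v'(2) by simp
    have mu: "min_last_bag k B (V - {v}) \<le> last_bag k B u"
      using min_last_bag_le[of "V - {v}" u] V(1) \<open>u \<in> V - {v}\<close> by auto
    have un: "u < n" using \<open>u \<in> V - {v}\<close> V(2) by auto
    have "u \<in> B ?m" using Sm u by blast
    from path_decomposition_interval[OF pd m mu last_k[OF un] this in_last[OF un]]
    show "u \<in> B (min_last_bag k B (V - {v}))" .
  qed
qed

definition leaf_valued :: "((nat \<Rightarrow> nat) \<Rightarrow> ('v, 'a::comm_ring_1) mpoly) \<Rightarrow> bool" where
  "leaf_valued g \<longleftrightarrow> (\<forall>\<phi>. leaf_poly (g \<phi>))"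

lemma sum_product_split_dense:
  assumes "finite V" "v \<in> V" "\<forall>f\<in>set I. local_factor f"
  shows "sum_product N V ((SD, D) # I) =
    sum_product N (V - {v}) ((elim_scope v ((SD, D) # filter (\<lambda>f. v \<in> fst f) I),
      eliminate N v ((SD, D) # filter (\<lambda>f. v \<in> fst f) I)) # filter (\<lambda>f. v \<notin> fst f) I)"
    (is "_ = ?rhs")
proof -
  have "sum_product N V ((SD, D) # I) =
      sum_product N V (((SD, D) # filter (\<lambda>f. v \<in> fst f) I) @ filter (\<lambda>f. v \<notin> fst f) I)"
    by (simp add: sum_product_def prod_list_filter_split[of _ I "\<lambda>f. v \<in> fst f"] mult.assoc)
  also have "\<dots> = ?rhs"
    by (rule sum_product_eliminate) (use assms in auto)
  finally show ?thesis .
qed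

lemma buildable_tabulate_eliminate_dense:
  assumes "circuit_ok True gs" "depends_only SD D" "tabulated N gs SD D" "\<forall>f\<in>set I. leaf_valued (snd f)"
    and "finite (elim_scope v ((SD, D) # I))" "card (elim_scope v ((SD, D) # I)) \<le> w"
  shows "buildable True gs ((N + 1) ^ w * (N * (2 * length I) + N + 1))
           (\<lambda>gs'. tabulated N gs' (elim_scope v ((SD, D) # I)) (eliminate N v ((SD, D) # I)))"
proof -
  have "buildable True gs ((N + 1) ^ w * (N * (2 * length I) + N + 1))
      (\<lambda>gs'. tabulated N gs' SD D \<and> tabulated N gs' (elim_scope v ((SD, D) # I)) (eliminate N v ((SD, D) # I)))"
  proof (rule buildable_tabulate_eliminate[where P = "\<lambda>gs. tabulated N gs SD D", OF assms(1,3) _ assms(5,6)])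
    show "\<And>gs gs'. tabulated N gs SD D \<Longrightarrow> prefix gs gs' \<Longrightarrow> tabulated N gs' SD D"
      by (rule tabulated_prefix)
  next
    fix \<psi> a gs' assume \<psi>: "\<psi> \<in> assignments N (elim_scope v ((SD, D) # I))" "a < N"
      and gs': "circuit_ok True gs'" "tabulated N gs' SD D"
    have "\<forall>u\<in>SD. (\<psi>(v := a)) u < N" using assignments_elim_scope_upd[OF \<psi>, of "(SD, D)"] by simp
    then have "provides gs' (D (\<psi>(v := a)))" by (rule tabulated_provides[OF gs'(2) assms(2)])
    moreover have "\<forall>f\<in>set I. leaf_poly (snd f (\<psi>(v := a)))" using assms(4) by (simp add: leaf_valued_def)
    ultimately show "buildable True gs' (2 * length I)
        (\<lambda>gs''. provides gs'' (\<Prod>f\<leftarrow>(SD, D) # I. snd f (\<psi>(v := a))))"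
      using buildable_times_leaves[OF gs'(1)] by simp
  qed
  then show ?thesis by (rule buildable_weaken) blast
qed

text \<open>The circuit stays skew: one factor D is dense and tabulated, all others are leaves.
  Eliminating v multiplies D only by leaves and tabulates the result as the new dense factor.\<close>

lemma buildable_sum_product_path:
  fixes I :: "('v, 'a::comm_ring_1) mpoly factor list"
  assumes pd: "path_decomposition n E k B" and w: "\<forall>t<k. card (B t) \<le> w"
    and "finite V" "V \<subseteq> {0..<n}"
    and "SD \<subseteq> V" "V \<noteq> {} \<longrightarrow> SD \<subseteq> B (min_last_bag k B V)" "depends_only SD D" "tabulated N gs SD D"
    and "\<forall>f\<in>set I. fst f \<subseteq> V \<and> (\<exists>s<k. fst f \<subseteq> B s) \<and> local_factor f \<and> leaf_valued (snd f)"
    and "circuit_ok True gs" "length I \<le> L"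
  shows "buildable True gs (card V * ((N + 1) ^ w * (N * (2 * L) + N + 1)) + 2 * L)
           (\<lambda>gs'. provides gs' (sum_product N V ((SD, D) # I)))"
  using assms(3-)
proof (induction "card V" arbitrary: V SD D I gs)
  case 0
  then have "V = {}" "SD = {}" by auto
  then have "provides gs (D (\<lambda>_. 0))" using tabulated_provides[OF "0.prems"(6,5)] by simp
  then have "buildable True gs (2 * length I) (\<lambda>gs'. provides gs' (sum_product N V ((SD, D) # I)))"
    using buildable_times_leaves[OF "0.prems"(8), of _ I "\<lambda>f. snd f (\<lambda>_. 0)"] "0.prems"(7) \<open>V = {}\<close>
    by (auto simp: sum_product_empty leaf_valued_def)
  then show ?case by (rule buildable_mono) (use "0.prems"(9) in auto)
next
  case (Suc c)
  let ?X = "(N + 1) ^ w * (N * (2 * L) + N + 1)"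
  obtain v where v: "v \<in> V" "last_bag k B v = min_last_bag k B V"
    using min_last_bag_attained[OF Suc.prems(1)] Suc.hyps(2) by force
  have cV: "card (V - {v}) = c" using Suc.hyps(2) Suc.prems(1) v(1) by simp
  define I1 where "I1 = filter (\<lambda>f. v \<in> fst f) I"
  define S where "S = elim_scope v ((SD, D) # I1)"
  have "SD \<subseteq> B (min_last_bag k B V)" "\<forall>f\<in>set I. fst f \<subseteq> V \<and> (\<exists>s<k. fst f \<subseteq> B s)"
    using Suc.prems(4,7) v(1) by auto
  note scope = path_elim_scope[OF pd Suc.prems(1,2) v Suc.prems(3) this w S_def[unfolded I1_def]]
  have "length I1 \<le> L"
    using Suc.prems(9) length_filter_le[of "\<lambda>f. v \<in> fst f" I] unfolding I1_def by linarith
  have leaves: "\<forall>f\<in>set I1. leaf_valued (snd f)" using Suc.prems(7) by (simp add: I1_def)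
  have "buildable True gs ((N + 1) ^ w * (N * (2 * length I1) + N + 1))
      (\<lambda>gs'. tabulated N gs' S (eliminate N v ((SD, D) # I1)))"
    unfolding S_def by (rule buildable_tabulate_eliminate_dense[OF Suc.prems(8,5,6) leaves scope(1,2)[unfolded S_def]])
  then have first: "buildable True gs ?X (\<lambda>gs'. tabulated N gs' S (eliminate N v ((SD, D) # I1)))"
    by (rule buildable_mono) (use \<open>length I1 \<le> L\<close> in auto)
  have local_I: "\<forall>f\<in>set I. local_factor f" using Suc.prems(7) by blast
  have B: "buildable True gs (?X + (c * ?X + 2 * L)) (\<lambda>gs'. provides gs' (sum_product N V ((SD, D) # I)))"
  proof (rule buildable_seq[OF first])
    fix gs1 assume gs1: "circuit_ok True gs1" "tabulated N gs1 S (eliminate N v ((SD, D) # I1))"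
    let ?I2 = "filter (\<lambda>f. v \<notin> fst f) I"
    have "buildable True gs1 (card (V - {v}) * ?X + 2 * L)
        (\<lambda>gs'. provides gs' (sum_product N (V - {v}) ((S, eliminate N v ((SD, D) # I1)) # ?I2)))"
    proof (rule Suc.hyps(1))
      show "c = card (V - {v})" "finite (V - {v})" "V - {v} \<subseteq> {0..<n}" using cV Suc.prems(1,2) by auto
      show "S \<subseteq> V - {v}" "V - {v} \<noteq> {} \<longrightarrow> S \<subseteq> B (min_last_bag k B (V - {v}))"
        using scope(3,4) by auto
      show "depends_only S (eliminate N v ((SD, D) # I1))"
        unfolding S_def by (rule depends_only_eliminate) (use Suc.prems(5) local_I in \<open>auto simp: I1_def\<close>)
      show "\<forall>f\<in>set ?I2. fst f \<subseteq> V - {v} \<and> (\<exists>s<k. fst f \<subseteq> B s) \<and> local_factor f \<and> leaf_valued (snd f)"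
        using Suc.prems(7) by fastforce
      show "length ?I2 \<le> L" using Suc.prems(9) length_filter_le[of _ I] by (meson le_trans)
    qed (use gs1 in auto)
    then show "buildable True gs1 (c * ?X + 2 * L) (\<lambda>gs'. provides gs' (sum_product N V ((SD, D) # I)))"
      using sum_product_split_dense[OF Suc.prems(1) v(1) local_I, of N SD D] cV
      by (simp add: S_def I1_def)
  qed
  have "?X + (c * ?X + 2 * L) = card V * ?X + 2 * L"
    using Suc.hyps(2)[symmetric] by simp
  then show ?case using B by (simp only:)
qed

section \<open>The homomorphism polynomial as a sum of products\<close>

definition vertex_factor :: "nat \<Rightarrow> (hvar, 'a::comm_ring_1) mpoly factor" where
  "vertex_factor u = ({u}, \<lambda>\<phi>. mvar (Zv u (\<phi> u)))"

definition edge_factor :: "nat \<Rightarrow> nat set \<Rightarrow> (hvar, 'a::comm_ring_1) mpoly factor" where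
  "edge_factor N e = (e, \<lambda>\<phi>. if \<phi> ` e \<in> complete_edges N then mvar (Yv (\<phi> ` e)) else 0)"

lemma wf_graph_edges:
  assumes "wf_graph n E"
  shows "finite E" "card E \<le> n * n"
proof -
  have sub: "E \<subseteq> (\<lambda>(u, v). {u, v}) ` ({..<n} \<times> {..<n})"
    using assms unfolding wf_graph_def by fastforce
  then show "finite E" using finite_subset by blast
  have "card E \<le> card ((\<lambda>(u, v). {u, v}) ` ({..<n} \<times> {..<n}))" using sub by (intro card_mono) auto
  also have "\<dots> \<le> n * n" using card_image_le[of "{..<n} \<times> {..<n}"] by (simp add: card_cartesian_product)
  finally show "card E \<le> n * n" .
qed

lemma hom_poly_eq_sum_product:
  assumes "wf_graph n EG" "set es = EG" "distinct es"
  shows "(hom_poly n EG N (complete_edges N) :: (hvar, 'a::comm_ring_1) mpoly) =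
    sum_product N {0..<n} (map vertex_factor [0..<n] @ map (edge_factor N) es)"
proof -
  let ?Z = "\<lambda>\<phi>. \<Prod>u\<in>{0..<n}. mvar (Zv u (\<phi> u)) :: (hvar, 'a) mpoly"
  let ?Y = "\<lambda>\<phi> e. snd (edge_factor N e) \<phi> :: (hvar, 'a) mpoly"
  have "hom_poly n EG N (complete_edges N) = (\<Sum>\<phi>\<in>homs n EG N (complete_edges N). ?Z \<phi> * (\<Prod>e\<in>EG. ?Y \<phi> e))"
    unfolding hom_poly_def by (intro sum.cong refl arg_cong2[where f = "(*)"] prod.cong)
      (auto simp: homs_def edge_factor_def)
  also have "\<dots> = (\<Sum>\<phi>\<in>assignments N {0..<n}. ?Z \<phi> * (\<Prod>e\<in>EG. ?Y \<phi> e))"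
  proof (rule sum.mono_neutral_left)
    show "finite (assignments N {0..<n})" by (rule finite_assignments) simp
    show "\<forall>\<phi>\<in>assignments N {0..<n} - homs n EG N (complete_edges N). ?Z \<phi> * (\<Prod>e\<in>EG. ?Y \<phi> e) = 0"
    proof
      fix \<phi> assume "\<phi> \<in> assignments N {0..<n} - homs n EG N (complete_edges N)"
      then have "\<exists>e\<in>EG. \<phi> ` e \<notin> complete_edges N" by (auto simp: homs_def assignments_def)
      then have "(\<Prod>e\<in>EG. ?Y \<phi> e) = 0"
        using wf_graph_edges(1)[OF assms(1)] by (intro prod_zero) (auto simp: edge_factor_def)
      then show "?Z \<phi> * (\<Prod>e\<in>EG. ?Y \<phi> e) = 0" by simp
    qed
  qed (auto simp: finite_assignments homs_def assignments_def)
  also have "\<dots> = sum_product N {0..<n} (map vertex_factor [0..<n] @ map (edge_factor N) es)"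
    by (simp add: sum_product_def vertex_factor_def prod.distinct_set_conv_list[symmetric] assms(2,3)
        o_def flip: atLeastLessThan_upt)
  finally show ?thesis .
qed

definition graph_factor :: "nat \<Rightarrow> nat set set \<Rightarrow> ('v, 'a::comm_ring_1) mpoly factor \<Rightarrow> bool" where
  "graph_factor n EG f \<longleftrightarrow> local_factor f \<and> leaf_valued (snd f) \<and> finite (fst f) \<and> card (fst f) \<le> 2
     \<and> ((\<exists>u<n. fst f = {u}) \<or> fst f \<in> EG)"

lemma hom_poly_factorisation:
  assumes "wf_graph n EG"
  obtains fs where "(hom_poly n EG N (complete_edges N) :: (hvar, 'a::comm_ring_1) mpoly) = sum_product N {0..<n} fs"
    "length fs \<le> n + n * n" "\<forall>f\<in>set fs. graph_factor n EG f"
proof -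
  obtain es where es: "set es = EG" "distinct es"
    using finite_distinct_list[OF wf_graph_edges(1)[OF assms]] by blast
  let ?fs = "map vertex_factor [0..<n] @ map (edge_factor N) es :: (hvar, 'a) mpoly factor list"
  show ?thesis
  proof (rule that[of ?fs])
    show "hom_poly n EG N (complete_edges N) = sum_product N {0..<n} ?fs"
      by (rule hom_poly_eq_sum_product[OF assms es])
    show "length ?fs \<le> n + n * n" using wf_graph_edges(2)[OF assms] distinct_card[OF es(2)] es(1) by simp
    have "graph_factor n EG (edge_factor N e :: (hvar, 'a) mpoly factor)" if e: "e \<in> EG" for e
    proof -
      obtain a b where "a \<noteq> b" "a < n" "b < n" "e = {a, b}" using assms e unfolding wf_graph_def by blast
      moreover have "depends_only e (\<lambda>\<phi>. if \<phi> ` e \<in> complete_edges N then mvar (Yv (\<phi> ` e)) else 0 :: (hvar, 'a) mpoly)"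
        unfolding depends_only_def by (metis (no_types, lifting) image_cong)
      ultimately show ?thesis using e
        by (auto simp: graph_factor_def edge_factor_def leaf_valued_def leaf_poly_def simp flip: mconst_0)
    qed
    moreover have "graph_factor n EG (vertex_factor u :: (hvar, 'a) mpoly factor)" if "u < n" for u
      using that by (auto simp: graph_factor_def vertex_factor_def depends_only_def leaf_valued_def leaf_poly_def)
    ultimately show "\<forall>f\<in>set ?fs. graph_factor n EG f" using es(1) by auto
  qed
qed

lemma prod_mvar:
  "finite A \<Longrightarrow> (\<Prod>i\<in>A. mvar (f i) :: ('v, 'a::comm_ring_1) mpoly) =
     Poly_Mapping.single (\<Sum>i\<in>A. Poly_Mapping.single (f i) 1) 1"
  by (induction A rule: finite_induct) (auto simp: mvar_def mult_single)

definition hom_monomial :: "nat \<Rightarrow> nat set set \<Rightarrow> (nat \<Rightarrow> nat) \<Rightarrow> hvar \<Rightarrow>\<^sub>0 nat" where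
  "hom_monomial n EG \<phi> =
     (\<Sum>u\<in>{0..<n}. Poly_Mapping.single (Zv u (\<phi> u)) 1) + (\<Sum>e\<in>EG. Poly_Mapping.single (Yv (\<phi> ` e)) 1)"

lemma hom_poly_eq_sum_monomials:
  "finite EG \<Longrightarrow> (hom_poly n EG N EH :: (hvar, 'a::comm_ring_1) mpoly) =
    (\<Sum>\<phi>\<in>homs n EG N EH. Poly_Mapping.single (hom_monomial n EG \<phi>) 1)"
  unfolding hom_poly_def hom_monomial_def by (simp add: prod_mvar mult_single)

lemma keys_hom_poly: "finite EG \<Longrightarrow>
    Poly_Mapping.keys (hom_poly n EG N EH :: (hvar, 'a::comm_ring_1) mpoly) \<subseteq> hom_monomial n EG ` homs n EG N EH"
  unfolding hom_poly_eq_sum_monomials by (rule order_trans[OF keys_sum]) auto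

lemma mono_deg_eq_sum:
  "finite K \<Longrightarrow> Poly_Mapping.keys \<mu> \<subseteq> K \<Longrightarrow> mono_deg \<mu> = sum (Poly_Mapping.lookup \<mu>) K"
  unfolding mono_deg_def by (rule sum.mono_neutral_left) (auto simp: in_keys_iff)

lemma mono_deg_add: "mono_deg (a + b) = mono_deg a + mono_deg b"
proof -
  let ?K = "Poly_Mapping.keys a \<union> Poly_Mapping.keys b"
  have "mono_deg (a + b) = sum (Poly_Mapping.lookup (a + b)) ?K"
    by (rule mono_deg_eq_sum) (auto simp: keys_add)
  also have "\<dots> = mono_deg a + mono_deg b"
    using mono_deg_eq_sum[of ?K a] mono_deg_eq_sum[of ?K b] by (simp add: lookup_add sum.distrib)
  finally show ?thesis .
qed

lemma mono_deg_0 [simp]: "mono_deg 0 = 0"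
  by (simp add: mono_deg_def)

lemma mono_deg_sum: "mono_deg (sum f A) = (\<Sum>x\<in>A. mono_deg (f x))"
  by (induction A rule: infinite_finite_induct) (simp_all add: mono_deg_add)

lemma mono_deg_single [simp]: "mono_deg (Poly_Mapping.single x (Suc 0)) = 1"
  by (simp add: mono_deg_def)

lemma mono_deg_hom_monomial: "finite EG \<Longrightarrow> mono_deg (hom_monomial n EG \<phi>) = n + card EG"
  by (simp add: hom_monomial_def mono_deg_add mono_deg_sum)

lemma keys_hom_monomial:
  assumes "wf_graph n EG" "\<phi> \<in> homs n EG N EH"
  shows "Poly_Mapping.keys (hom_monomial n EG \<phi>) \<subseteq>
     (\<lambda>(u, a). Zv u a) ` ({..<n} \<times> {..<N}) \<union> (\<lambda>(a, b). Yv {a, b}) ` ({..<N} \<times> {..<N})"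
proof -
  have Z: "\<phi> u < N" if "u < n" for u using assms(2) that by (auto simp: homs_def)
  have Y: "\<exists>a b. a < N \<and> b < N \<and> \<phi> ` e = {a, b}" if "e \<in> EG" for e
    using assms that Z by (fastforce simp: wf_graph_def)
  have "Poly_Mapping.keys (hom_monomial n EG \<phi>) \<subseteq>
      (\<Union>u\<in>{0..<n}. {Zv u (\<phi> u)}) \<union> (\<Union>e\<in>EG. {Yv (\<phi> ` e)})"
    unfolding hom_monomial_def
    by (rule order_trans[OF keys_add Un_mono[OF order_trans[OF keys_sum] order_trans[OF keys_sum]]]) auto
  also have "\<dots> \<subseteq> (\<lambda>(u, a). Zv u a) ` ({..<n} \<times> {..<N}) \<union> (\<lambda>(a, b). Yv {a, b}) ` ({..<N} \<times> {..<N})"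
    using Z Y by fastforce
  finally show ?thesis .
qed

lemma hom_poly_vars_deg:
  assumes "wf_graph n EG"
  shows "finite (mpoly_vars (hom_poly n EG N EH :: (hvar, 'a::comm_ring_1) mpoly))"
    "card (mpoly_vars (hom_poly n EG N EH :: (hvar, 'a) mpoly)) \<le> n * N + N * N"
    "mpoly_deg (hom_poly n EG N EH :: (hvar, 'a) mpoly) \<le> n + n * n"
proof -
  let ?p = "hom_poly n EG N EH :: (hvar, 'a) mpoly"
  let ?A = "(\<lambda>(u, a). Zv u a) ` ({..<n} \<times> {..<N})" and ?B = "(\<lambda>(a, b). Yv {a, b}) ` ({..<N} \<times> {..<N})"
  note keys = keys_hom_poly[OF wf_graph_edges(1)[OF assms]]
  have sub: "mpoly_vars ?p \<subseteq> ?A \<union> ?B"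
    unfolding mpoly_vars_def using keys keys_hom_monomial[OF assms] by blast
  then show "finite (mpoly_vars ?p)" by (rule finite_subset) simp
  have "card (mpoly_vars ?p) \<le> card (?A \<union> ?B)" using sub by (intro card_mono) auto
  also have "\<dots> \<le> n * N + N * N"
    using card_Un_le[of ?A ?B] card_image_le[of "{..<n} \<times> {..<N}" "\<lambda>(u, a). Zv u a"]
      card_image_le[of "{..<N} \<times> {..<N}" "\<lambda>(a, b). Yv {a, b}"] by (simp add: card_cartesian_product)
  finally show "card (mpoly_vars ?p) \<le> n * N + N * N" .
  have "mono_deg \<mu> \<le> n + n * n" if "\<mu> \<in> Poly_Mapping.keys ?p" for \<mu>
    using that keys mono_deg_hom_monomial wf_graph_edges[OF assms] by fastforce
  then show "mpoly_deg ?p \<le> n + n * n" unfolding mpoly_deg_def by (intro Max.boundedI) auto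
qed

lemma poly_bounded_le: "poly_bounded g \<Longrightarrow> (\<And>m. f m \<le> g m) \<Longrightarrow> poly_bounded f"
  unfolding poly_bounded_def using order.trans by blast

lemma poly_bounded_const: "poly_bounded (\<lambda>_. c)"
  unfolding poly_bounded_def
  by (intro exI[of _ c]) (auto intro: order.trans[OF _ mult_le_mono2[of 1]] simp: Suc_le_eq)

lemma poly_bounded_add:
  assumes "poly_bounded f" "poly_bounded g" shows "poly_bounded (\<lambda>m. f m + g m)"
proof -
  obtain a b where a: "\<And>m. f m \<le> a * Suc m ^ a" and b: "\<And>m. g m \<le> b * Suc m ^ b"
    using assms unfolding poly_bounded_def by blast
  have "f m + g m \<le> (2 * (a + b)) * Suc m ^ (2 * (a + b))" for m
  proof -
    have "a * Suc m ^ a \<le> (a + b) * Suc m ^ (a + b)" "b * Suc m ^ b \<le> (a + b) * Suc m ^ (a + b)"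
      by (intro mult_le_mono power_increasing; simp)+
    then have "f m + g m \<le> (2 * (a + b)) * Suc m ^ (a + b)" using a[of m] b[of m] by linarith
    also have "\<dots> \<le> (2 * (a + b)) * Suc m ^ (2 * (a + b))" by (intro mult_le_mono power_increasing) auto
    finally show ?thesis .
  qed
  then show ?thesis unfolding poly_bounded_def by blast
qed

lemma poly_bounded_mult:
  assumes "poly_bounded f" "poly_bounded g" shows "poly_bounded (\<lambda>m. f m * g m)"
proof -
  obtain a b where a: "\<And>m. f m \<le> a * Suc m ^ a" and b: "\<And>m. g m \<le> b * Suc m ^ b"
    using assms unfolding poly_bounded_def by blast
  have "f m * g m \<le> (a * b + a + b) * Suc m ^ (a * b + a + b)" for m
  proof -
    have "f m * g m \<le> (a * Suc m ^ a) * (b * Suc m ^ b)" using a b by (intro mult_le_mono)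
    also have "\<dots> = (a * b) * Suc m ^ (a + b)" by (simp add: power_add algebra_simps)
    also have "\<dots> \<le> (a * b + a + b) * Suc m ^ (a * b + a + b)" by (intro mult_le_mono power_increasing) auto
    finally show ?thesis .
  qed
  then show ?thesis unfolding poly_bounded_def by blast
qed

lemma poly_bounded_power: "poly_bounded f \<Longrightarrow> poly_bounded (\<lambda>m. f m ^ j)"
  by (induction j) (simp_all add: poly_bounded_const poly_bounded_mult)

lemma p_family_hom_poly:
  assumes "\<And>m. wf_graph (nG m) (EG m)" "poly_bounded nG" "poly_bounded nH"
  shows "p_family (\<lambda>m. hom_poly (nG m) (EG m) (nH m) (EH m) :: (hvar, 'a::comm_ring_1) mpoly)"
  unfolding p_family_def
proof (intro conjI allI)
  show "poly_bounded (\<lambda>m. card (mpoly_vars (hom_poly (nG m) (EG m) (nH m) (EH m) :: (hvar, 'a) mpoly)))"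
    by (rule poly_bounded_le[OF _ hom_poly_vars_deg(2)[OF assms(1)]])
      (intro poly_bounded_add poly_bounded_mult assms(2,3))
  show "poly_bounded (\<lambda>m. mpoly_deg (hom_poly (nG m) (EG m) (nH m) (EH m) :: (hvar, 'a) mpoly))"
    by (rule poly_bounded_le[OF _ hom_poly_vars_deg(3)[OF assms(1)]])
      (intro poly_bounded_add poly_bounded_mult assms(2))
qed (rule hom_poly_vars_deg(1)[OF assms(1)])

lemma buildable_tabulate_leaf_valued:
  fixes g :: "(nat \<Rightarrow> nat) \<Rightarrow> ('v, 'a::comm_ring_1) mpoly"
  assumes "circuit_ok skew gs" "leaf_valued g" "finite S" "card S \<le> w"
  shows "buildable skew gs ((N + 1) ^ w) (\<lambda>gs'. tabulated N gs' S g)"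
proof -
  have "buildable skew gs (1 * card (assignments N S)) (\<lambda>gs'. True \<and> (\<forall>\<phi>\<in>assignments N S. provides gs' (g \<phi>)))"
  proof (rule buildable_iter)
    fix \<phi> and gs' :: "('v, 'a) gate list" assume "circuit_ok skew gs'"
    then show "buildable skew gs' 1 (\<lambda>gs''. provides gs'' (g \<phi>))"
      using assms(2) by (intro buildable_leaf) (auto simp: leaf_valued_def)
  qed (use assms finite_assignments provides_prefix in auto)
  then show ?thesis unfolding tabulated_def
    by (rule buildable_mono) (use card_assignments_le[OF assms(3,4)] in auto)
qed

lemma buildable_tabulate_leaf_factors:
  assumes "circuit_ok skew gs" "\<forall>f\<in>set fs. leaf_valued (snd f) \<and> finite (fst f) \<and> card (fst f) \<le> w"
  shows "buildable skew gs ((N + 1) ^ w * length fs) (\<lambda>gs'. \<forall>f\<in>set fs. tabulated N gs' (fst f) (snd f))"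
  using assms
proof (induction fs arbitrary: gs)
  case Nil
  then show ?case by (auto intro: buildable_refl)
next
  case (Cons f fs)
  have "buildable skew gs ((N + 1) ^ w + (N + 1) ^ w * length fs)
      (\<lambda>gs'. \<forall>f\<in>set (f # fs). tabulated N gs' (fst f) (snd f))"
  proof (rule buildable_seq[OF buildable_tabulate_leaf_valued[OF Cons.prems(1)]])
    fix gs1 assume "prefix gs gs1" "circuit_ok skew gs1" "tabulated N gs1 (fst f) (snd f)"
    then show "buildable skew gs1 ((N + 1) ^ w * length fs) (\<lambda>gs'. \<forall>f\<in>set (f # fs). tabulated N gs' (fst f) (snd f))"
      using Cons.IH[of gs1] Cons.prems(2) by (auto elim!: buildable_weaken intro: tabulated_prefix)
  qed (use Cons.prems(2) in auto)
  then show ?case by (simp add: algebra_simps)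
qed

lemma graph_factor_scope:
  assumes "wf_graph n EG" "graph_factor n EG f"
  shows "fst f \<subseteq> {0..<n}"
  using assms unfolding graph_factor_def wf_graph_def by fastforce

lemma graph_factor_in_bag:
  assumes "\<forall>v<n. \<exists>t<k. v \<in> B t" "\<forall>e\<in>EG. \<exists>t<k. e \<subseteq> B t" "graph_factor n EG f"
  shows "\<exists>t<k. fst f \<subseteq> B t"
proof -
  consider u where "u < n" "fst f = {u}" | "fst f \<in> EG" using assms(3) unfolding graph_factor_def by blast
  then show ?thesis
  proof cases
    case 1
    then show ?thesis using assms(1) by auto
  qed (use assms(2) in blast)
qed

lemma tree_decomposition_of_graph_factors:
  assumes "tree_decomposition n EG k TE B" "\<forall>f\<in>set fs. graph_factor n EG f"
  shows "tree_decomposition_of {0..<k} TE {0..<n} B (fst ` set fs)"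
proof -
  have "is_tree k TE" "\<forall>t<k. B t \<subseteq> {0..<n}" "\<forall>v<n. \<exists>t<k. v \<in> B t" "\<forall>e\<in>EG. \<exists>t<k. e \<subseteq> B t"
    "\<forall>v<n. connected_in TE {t. t < k \<and> v \<in> B t}"
    using assms(1) unfolding tree_decomposition_def by blast+
  moreover have "\<exists>t\<in>{0..<k}. fst f \<subseteq> B t" if "f \<in> set fs" for f
    using graph_factor_in_bag[of n k B EG f] calculation(3,4) assms(2) that by auto
  ultimately show ?thesis
    unfolding tree_decomposition_of_def tree_on_def is_tree_def wf_graph_def
    by (auto simp: atLeast0LessThan)
qed

definition tree_circuit_size :: "nat \<Rightarrow> nat \<Rightarrow> nat \<Rightarrow> nat" where
  "tree_circuit_size n N w =
     (N + 1) ^ 2 * (2 * n + n * n) + n * ((N + 1) ^ (w + 1) * (N * (2 * n + n * n + 1) + N + 1))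
     + (2 * n + n * n + 1) + 2"

definition path_circuit_size :: "nat \<Rightarrow> nat \<Rightarrow> nat \<Rightarrow> nat" where
  "path_circuit_size n N w = n * ((N + 1) ^ (w + 1) * (N * (2 * (n + n * n)) + N + 1)) + 2 * (n + n * n) + 3"

lemma hom_poly_tree_circuit:
  assumes "wf_graph n EG" "treewidth_le n EG w"
  shows "\<exists>gs. computes gs (hom_poly n EG N (complete_edges N) :: (hvar, 'a::comm_ring_1) mpoly)
    \<and> length gs \<le> tree_circuit_size n N w"
proof -
  obtain fs :: "(hvar, 'a) mpoly factor list" where fs: "hom_poly n EG N (complete_edges N) = sum_product N {0..<n} fs"
    "length fs \<le> n + n * n" "\<forall>f\<in>set fs. graph_factor n EG f"
    by (rule hom_poly_factorisation[OF assms(1)])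
  obtain k TE B where td: "tree_decomposition n EG k TE B" and bags: "\<forall>t<k. card (B t) \<le> w + 1"
    using assms(2) unfolding treewidth_le_def by blast
  let ?L = "2 * n + n * n"
  have "buildable False [] ((N + 1) ^ 2 * ?L + (n * ((N + 1) ^ (w + 1) * (N * (?L + 1) + N + 1)) + (?L + 1)))
      (\<lambda>gs'. provides gs' (sum_product N {0..<n} fs))"
  proof (rule buildable_seq)
    show "buildable False [] ((N + 1) ^ 2 * ?L) (\<lambda>gs'. \<forall>f\<in>set fs. tabulated N gs' (fst f) (snd f))"
      by (rule buildable_mono[OF buildable_tabulate_leaf_factors]) (use fs(2,3) in \<open>auto simp: graph_factor_def\<close>)
    fix gs1 assume "circuit_ok False gs1" "\<forall>f\<in>set fs. tabulated N gs1 (fst f) (snd f)"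
    then show "buildable False gs1 (n * ((N + 1) ^ (w + 1) * (N * (?L + 1) + N + 1)) + (?L + 1))
        (\<lambda>gs'. provides gs' (sum_product N {0..<n} fs))"
      using buildable_sum_product_tree[OF _ tree_decomposition_of_graph_factors[OF td fs(3)], of "w + 1" N gs1 ?L]
        fs(2,3) bags by (auto simp: graph_factor_def)
  qed
  then show ?thesis
    using computes_if_buildable fs(1) unfolding tree_circuit_size_def by fastforce
qed

lemma hom_poly_path_circuit:
  assumes "wf_graph n EG" "pathwidth_le n EG w"
  shows "\<exists>gs. computes gs (hom_poly n EG N (complete_edges N) :: (hvar, 'a::comm_ring_1) mpoly)
    \<and> skew_circuit gs \<and> length gs \<le> path_circuit_size n N w"
proof -
  obtain fs :: "(hvar, 'a) mpoly factor list" where fs: "hom_poly n EG N (complete_edges N) = sum_product N {0..<n} fs"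
    "length fs \<le> n + n * n" "\<forall>f\<in>set fs. graph_factor n EG f"
    by (rule hom_poly_factorisation[OF assms(1)])
  obtain k B where pd: "path_decomposition n EG k B" and bags: "\<forall>t<k. card (B t) \<le> w + 1"
    using assms(2) unfolding pathwidth_le_def by blast
  have one: "circuit_ok True [Cst 1]" "tabulated N [Cst 1] {} (\<lambda>_. 1 :: (hvar, 'a) mpoly)"
    by (simp_all add: circuit_ok_def skew_circuit_def tabulated_def provides_def circuit_vals_def)
  have "\<forall>f\<in>set fs. fst f \<subseteq> {0..<n} \<and> (\<exists>s<k. fst f \<subseteq> B s) \<and> local_factor f \<and> leaf_valued (snd f)"
  proof
    fix f assume "f \<in> set fs"
    then have f: "graph_factor n EG f" using fs(3) by blast
    have "\<exists>s<k. fst f \<subseteq> B s"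
      using path_decomposition_covers[OF pd] by (intro graph_factor_in_bag[OF _ _ f]) auto
    then show "fst f \<subseteq> {0..<n} \<and> (\<exists>s<k. fst f \<subseteq> B s) \<and> local_factor f \<and> leaf_valued (snd f)"
      using graph_factor_scope[OF assms(1) f] f unfolding graph_factor_def by blast
  qed
  then have "buildable True [Cst 1] (n * ((N + 1) ^ (w + 1) * (N * (2 * (n + n * n)) + N + 1)) + 2 * (n + n * n))
      (\<lambda>gs'. provides gs' (sum_product N {0..<n} (({}, \<lambda>_. 1) # fs)))"
    using buildable_sum_product_path[OF pd bags, of "{0..<n}" "{}" "\<lambda>_. 1" N "[Cst 1]" fs "n + n * n"]
      one fs(2) by (simp add: depends_only_def)
  moreover have "sum_product N {0..<n} (({}, \<lambda>_. 1) # fs) = sum_product N {0..<n} fs"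
    by (simp add: sum_product_def)
  ultimately show ?thesis
    using computes_if_buildable fs(1) unfolding path_circuit_size_def by fastforce
qed

lemma poly_bounded_circuit_sizes:
  assumes "poly_bounded nG" "poly_bounded nH"
  shows "poly_bounded (\<lambda>m. tree_circuit_size (nG m) (nH m) w)"
    and "poly_bounded (\<lambda>m. path_circuit_size (nG m) (nH m) w)"
  unfolding tree_circuit_size_def path_circuit_size_def
  by (intro poly_bounded_add poly_bounded_mult poly_bounded_power poly_bounded_const assms)+

theorem theorem3:
  fixes nG nH :: "nat \<Rightarrow> nat" and EG :: "nat \<Rightarrow> nat set set"
  assumes graphs: "\<And>m. wf_graph (nG m) (EG m)"
    and pG: "poly_bounded nG"
    and pH: "poly_bounded nH"
  shows "((\<exists>w. \<forall>m. treewidth_le (nG m) (EG m) w) \<longrightarrow>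
            in_VP (\<lambda>m. hom_poly (nG m) (EG m) (nH m) (complete_edges (nH m)) :: (hvar, 'a::field) mpoly))
       \<and> ((\<exists>w. \<forall>m. pathwidth_le (nG m) (EG m) w) \<longrightarrow>
            in_VBP (\<lambda>m. hom_poly (nG m) (EG m) (nH m) (complete_edges (nH m)) :: (hvar, 'a::field) mpoly))"
proof -
  let ?f = "\<lambda>m. hom_poly (nG m) (EG m) (nH m) (complete_edges (nH m)) :: (hvar, 'a) mpoly"
  have family: "p_family ?f" by (rule p_family_hom_poly[OF graphs pG pH])
  show ?thesis
  proof (intro conjI impI)
    assume "\<exists>w. \<forall>m. treewidth_le (nG m) (EG m) w"
    then obtain w where "\<forall>m. treewidth_le (nG m) (EG m) w" by blast
    then have "\<forall>m. \<exists>gs. computes gs (?f m) \<and> length gs \<le> tree_circuit_size (nG m) (nH m) w"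
      using hom_poly_tree_circuit[OF graphs] by blast
    then show "in_VP ?f" unfolding in_VP_def using family poly_bounded_circuit_sizes(1)[OF pG pH] by blast
  next
    assume "\<exists>w. \<forall>m. pathwidth_le (nG m) (EG m) w"
    then obtain w where "\<forall>m. pathwidth_le (nG m) (EG m) w" by blast
    then have "\<forall>m. \<exists>gs. computes gs (?f m) \<and> skew_circuit gs \<and> length gs \<le> path_circuit_size (nG m) (nH m) w"
      using hom_poly_path_circuit[OF graphs] by blast
    then show "in_VBP ?f" unfolding in_VBP_def using family poly_bounded_circuit_sizes(2)[OF pG pH] by blast
  qed
qed

end
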